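(* For every finite simplicial graph $\Delta$ and every $m\in\mathbb{N}$, $m\ge1$, the partially commutative group $\mathbb{G}(\Delta)$ and the partially commutative group $\mathbb{G}(\Delta_m)$ of its $m$-inflation are universally equivalent.
   Context: $\mathbb{G}(\Gamma)=\langle V(\Gamma)\mid [x,y]=1 \text{ for } (x,y)\in E(\Gamma)\rangle$. The $m$-inflation $\Delta_m$ of $\Delta$ has vertices $v_1,\dots,v_m$ for each $v\in V(\Delta)$; $v_i,v_j$ are adjacent for $i\ne j$, and $v_i,w_k$ ($v\ne w$) are adjacent iff $(v,w)\in E(\Delta)$. Thus $\mathbb{G}(\Delta_m)$ is the graph product over $\Delta$ with vertex groups $\mathbb{Z}^m$. Two groups are universally equivalent if they satisfy the same universal first-order sentences in the language of groups. *)

theory Defs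
  imports "HOL-Algebra.Group"
begin

text \<open>Words are lists of letters (x, e), where x is a vertex and e = True means
x, e = False means x^{-1}.\<close>

definition gg_words :: "'v set \<Rightarrow> ('v \<times> bool) list set" where
  "gg_words V = {w. set (map fst w) \<subseteq> V}"

definition gg_step :: "'v set \<Rightarrow> ('v \<times> 'v) set \<Rightarrow>
    (('v \<times> bool) list \<times> ('v \<times> bool) list) set" where
  "gg_step V E =
     {(a @ [(x, e), (x, \<not> e)] @ b, a @ b) | a b x e.
        a \<in> gg_words V \<and> b \<in> gg_words V \<and> x \<in> V}
   \<union> {(a @ [(x, e), (y, d)] @ b, a @ [(y, d), (x, e)] @ b) | a b x e y d.
        a \<in> gg_words V \<and> b \<in> gg_words V \<and> (x, y) \<in> E}"

text \<open>The congruence on words defining the presentation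
 \<langle>V | [x,y] = 1 for (x,y) \<in> E\<rangle>.\<close>
definition gg_rel :: "'v set \<Rightarrow> ('v \<times> 'v) set \<Rightarrow>
    (('v \<times> bool) list \<times> ('v \<times> bool) list) set" where
  "gg_rel V E = Restr ((gg_step V E \<union> (gg_step V E)\<inverse>)\<^sup>*) (gg_words V)"

definition graph_group :: "'v set \<Rightarrow> ('v \<times> 'v) set \<Rightarrow> ('v \<times> bool) list set monoid" where
  "graph_group V E =
     \<lparr> carrier = gg_words V // gg_rel V E,
       mult = (\<lambda>X Y. \<Union>{gg_rel V E `` {x @ y} | x y. x \<in> X \<and> y \<in> Y}),
       one = gg_rel V E `` {[]} \<rparr>"

definition infl_vertices :: "'v set \<Rightarrow> nat \<Rightarrow> ('v \<times> nat) set" where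
  "infl_vertices V m = V \<times> {1..m}"

definition infl_edges :: "'v set \<Rightarrow> ('v \<times> 'v) set \<Rightarrow> nat \<Rightarrow> (('v \<times> nat) \<times> ('v \<times> nat)) set" where
  "infl_edges V E m =
     {((v, i), (v, j)) | v i j. v \<in> V \<and> i \<in> {1..m} \<and> j \<in> {1..m} \<and> i \<noteq> j}
   \<union> {((v, i), (w, k)) | v w i k. (v, w) \<in> E \<and> v \<noteq> w \<and> i \<in> {1..m} \<and> k \<in> {1..m}}"

datatype gterm = GVar nat | GOne | GMul gterm gterm | GInv gterm

text \<open>Quantifier-free formulas; a universal sentence is the universal closure
\<forall>x_1 ... x_n. \<phi> of a quantifier-free formula \<phi>.\<close>
datatype qf_form = FEq gterm gterm | FFalse | FNot qf_form
  | FAnd qf_form qf_form | FOr qf_form qf_form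

fun geval :: "('a, 'b) monoid_scheme \<Rightarrow> (nat \<Rightarrow> 'a) \<Rightarrow> gterm \<Rightarrow> 'a" where
  "geval G s (GVar n) = s n"
| "geval G s GOne = \<one>\<^bsub>G\<^esub>"
| "geval G s (GMul t u) = geval G s t \<otimes>\<^bsub>G\<^esub> geval G s u"
| "geval G s (GInv t) = inv\<^bsub>G\<^esub> (geval G s t)"

fun fsat :: "('a, 'b) monoid_scheme \<Rightarrow> (nat \<Rightarrow> 'a) \<Rightarrow> qf_form \<Rightarrow> bool" where
  "fsat G s (FEq t u) = (geval G s t = geval G s u)"
| "fsat G s FFalse = False"
| "fsat G s (FNot f) = (\<not> fsat G s f)"
| "fsat G s (FAnd f g) = (fsat G s f \<and> fsat G s g)"
| "fsat G s (FOr f g) = (fsat G s f \<or> fsat G s g)"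

definition sat_universal :: "('a, 'b) monoid_scheme \<Rightarrow> qf_form \<Rightarrow> bool" where
  "sat_universal G \<phi> = (\<forall>s. (\<forall>n. s n \<in> carrier G) \<longrightarrow> fsat G s \<phi>)"

definition universally_equivalent ::
    "('a, 'b) monoid_scheme \<Rightarrow> ('c, 'd) monoid_scheme \<Rightarrow> bool" where
  "universally_equivalent G H = (\<forall>\<phi>. sat_universal G \<phi> \<longleftrightarrow> sat_universal H \<phi>)"

end

theory Submission
  imports Defs
begin

text \<open>
  The map \<open>v \<mapsto> v\<^sub>1\<close> embeds \<open>\<bbbG>(\<Delta>)\<close> into \<open>\<bbbG>(\<Delta>\<^sub>m)\<close> (the projection
  \<open>v\<^sub>i \<mapsto> v\<close> is a left inverse), so every universal sentence true in \<open>\<bbbG>(\<Delta>\<^sub>m)\<close>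
  is true in \<open>\<bbbG>(\<Delta>)\<close>. Conversely \<open>\<bbbG>(\<Delta>)\<close> discriminates \<open>\<bbbG>(\<Delta>\<^sub>m)\<close>: the
  homomorphisms \<open>\<phi>\<^sub>N : v\<^sub>i \<mapsto> v\<^bsup>N\<^sup>i\<^esup>\<close> are, for all large \<open>N\<close>, nontrivial on
  any given nontrivial element. Indeed, write the element as a product of
  syllables, each syllable a word in the pairwise commuting copies
  \<open>v\<^sub>1, \<dots>, v\<^sub>m\<close> of one vertex, collected so that no two syllables of the same
  vertex can be brought together. Under \<open>\<phi>\<^sub>N\<close> the syllable
  \<open>v\<^sub>1\<^bsup>c\<^sub>1\<^esup> \<cdots> v\<^sub>m\<^bsup>c\<^sub>m\<^esup>\<close> becomes \<open>v\<^bsup>\<Sigma> c\<^sub>i N\<^sup>i\<^esup>\<close>, whose exponent is nonzero once \<open>N\<close>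
  exceeds all \<open>|c\<^sub>i|\<close>, and the image is again a reduced word, hence nontrivial
  by the normal form theorem for partially commutative groups. The latter is
  proved via the action of the group on words modulo commutation.
\<close>

section \<open>Words modulo commutation\<close>

fun inv_letter :: "'a \<times> bool \<Rightarrow> 'a \<times> bool" where
  "inv_letter (x, e) = (x, \<not> e)"

lemma inv_letter_inv_letter [simp]: "inv_letter (inv_letter a) = a"
  by (cases a) auto

lemma fst_inv_letter [simp]: "fst (inv_letter a) = fst a"
  by (cases a) auto

lemma inv_letter_neq [simp]: "inv_letter a \<noteq> a" "a \<noteq> inv_letter a"
  by (cases a, auto)+

definition comm_step :: "('a \<times> 'a) set \<Rightarrow> (('a \<times> bool) list \<times> ('a \<times> bool) list) set" where
  "comm_step E =
     {(u, v). \<exists>p q x y. u = p @ [x, y] @ q \<and> v = p @ [y, x] @ q \<and> (fst x, fst y) \<in> E}"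

abbreviation comm_equiv :: "('a \<times> 'a) set \<Rightarrow> (('a \<times> bool) list \<times> ('a \<times> bool) list) set" where
  "comm_equiv E \<equiv> (comm_step E)\<^sup>*"

lemma comm_equiv_sym:
  assumes "sym E" and "(u, v) \<in> comm_equiv E"
  shows "(v, u) \<in> comm_equiv E"
proof -
  have "sym (comm_step E)"
    using \<open>sym E\<close> unfolding comm_step_def sym_def by blast
  then show ?thesis
    using sym_rtrancl assms(2) unfolding sym_def by blast
qed

lemma comm_step_append:
  assumes "(u, v) \<in> comm_step E"
  shows "(p @ u @ q, p @ v @ q) \<in> comm_step E"
proof -
  obtain a b x y where "u = a @ [x, y] @ b" "v = a @ [y, x] @ b" "(fst x, fst y) \<in> E"
    using assms unfolding comm_step_def by blast
  then show ?thesis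
    unfolding comm_step_def
    by (simp only: mem_Collect_eq case_prod_conv)
      (rule exI[of _ "p @ a"], rule exI[of _ "b @ q"], rule exI[of _ x], rule exI[of _ y], simp)
qed

lemma comm_equiv_append:
  "(u, v) \<in> comm_equiv E \<Longrightarrow> (p @ u @ q, p @ v @ q) \<in> comm_equiv E"
  by (induction rule: rtrancl_induct) (auto intro: comm_step_append rtrancl_into_rtrancl)

lemma comm_equiv_Cons: "(u, v) \<in> comm_equiv E \<Longrightarrow> (a # u, a # v) \<in> comm_equiv E"
  using comm_equiv_append[of u v E "[a]" "[]"] by simp

lemma comm_equiv_swap: "(fst x, fst y) \<in> E \<Longrightarrow> (x # y # t, y # x # t) \<in> comm_equiv E"
  unfolding comm_step_def
  by (intro r_into_rtrancl, simp only: mem_Collect_eq case_prod_conv)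
    (rule exI[of _ "[]"], rule exI[of _ t], rule exI[of _ x], rule exI[of _ y], simp)

lemma comm_equiv_length: "(u, v) \<in> comm_equiv E \<Longrightarrow> length u = length v"
  by (induction rule: rtrancl_induct) (auto simp: comm_step_def)

lemma comm_equiv_Nil: "(u, []) \<in> comm_equiv E \<Longrightarrow> u = []"
  using comm_equiv_length by fastforce

text \<open>The two ways in which words starting with \<open>c\<close> and with \<open>d\<close> can be
  equal modulo commutation (Levi's lemma for traces).\<close>
definition levi_cases ::
    "('a \<times> 'a) set \<Rightarrow> 'a \<times> bool \<Rightarrow> ('a \<times> bool) list \<Rightarrow> 'a \<times> bool \<Rightarrow> ('a \<times> bool) list \<Rightarrow> bool"
  where
  "levi_cases E c u d v \<longleftrightarrow> (c = d \<and> (u, v) \<in> comm_equiv E) \<or>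
     ((fst c, fst d) \<in> E \<and> (\<exists>t. (u, d # t) \<in> comm_equiv E \<and> (v, c # t) \<in> comm_equiv E))"

lemma levi_cases_swap_front:
  assumes symE: "sym E"
    and IH: "\<And>u'. length u' < length u \<Longrightarrow> (c # u', y # q) \<in> comm_equiv E \<Longrightarrow> levi_cases E c u' y q"
    and xy: "(fst x, fst y) \<in> E" and cases: "levi_cases E c u x (y # q)"
  shows "levi_cases E c u y (x # q)"
  using cases[unfolded levi_cases_def]
proof (elim disjE conjE exE)
  assume "c = x" "(u, y # q) \<in> comm_equiv E"
  then show ?thesis using xy by (auto simp: levi_cases_def)
next
  fix t assume cx: "(fst c, fst x) \<in> E" and ut: "(u, x # t) \<in> comm_equiv E"
    and yq: "(y # q, c # t) \<in> comm_equiv E"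
  have "length t < length u" using comm_equiv_length[OF ut] by simp
  from IH[OF this comm_equiv_sym[OF symE yq], unfolded levi_cases_def] show ?thesis
  proof (elim disjE conjE exE)
    assume "c = y" "(t, q) \<in> comm_equiv E"
    then show ?thesis
      using rtrancl_trans[OF ut comm_equiv_Cons] unfolding levi_cases_def by blast
  next
    fix t' assume cy: "(fst c, fst y) \<in> E" and tt: "(t, y # t') \<in> comm_equiv E"
      and qq: "(q, c # t') \<in> comm_equiv E"
    have "(u, y # x # t') \<in> comm_equiv E"
      using ut comm_equiv_Cons[OF tt] comm_equiv_swap[OF xy] by (meson rtrancl_trans)
    moreover have "(fst x, fst c) \<in> E" using cx symE by (auto simp: sym_def)
    then have "(x # q, c # x # t') \<in> comm_equiv E"
      using comm_equiv_Cons[OF qq] comm_equiv_swap by (meson rtrancl_trans)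
    ultimately show ?thesis using cy unfolding levi_cases_def by blast
  qed
qed

lemma levi_cases_if_comm_equiv:
  assumes symE: "sym E" and "(c # u, d # v) \<in> comm_equiv E"
  shows "levi_cases E c u d v"
  using assms(2)
proof (induction "length u" arbitrary: u d v rule: less_induct)
  case less
  have "\<forall>d v. w = d # v \<longrightarrow> levi_cases E c u d v" if "(c # u, w) \<in> comm_equiv E" for w
    using that
  proof (induction w rule: rtrancl_induct)
    case base
    then show ?case by (auto simp: levi_cases_def)
  next
    case (step w w')
    from step.hyps(2) obtain p x y q where w: "w = p @ [x, y] @ q"
      and w': "w' = p @ [y, x] @ q" and xy: "(fst x, fst y) \<in> E"
      unfolding comm_step_def by blast
    show ?case
    proof (cases p)
      case Nil
      then show ?thesis
        using levi_cases_swap_front[OF symE less.hyps xy] step.IH w w' by simp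
    next
      case (Cons z p')
      have st: "(p' @ [x, y] @ q, p' @ [y, x] @ q) \<in> comm_equiv E"
        using xy unfolding comm_step_def by (intro r_into_rtrancl) blast
      have "levi_cases E c u z (p' @ [x, y] @ q)" using step.IH w Cons by simp
      then show ?thesis
        using w' Cons st comm_equiv_sym[OF symE st] unfolding levi_cases_def
        by (auto intro: rtrancl_trans)
    qed
  qed
  with less.prems show ?case by blast
qed

lemma comm_equiv_Cons_Cons:
  assumes "sym E" and "(c # u, d # v) \<in> comm_equiv E"
  shows "(c = d \<and> (u, v) \<in> comm_equiv E) \<or>
     ((fst c, fst d) \<in> E \<and> (\<exists>t. (u, d # t) \<in> comm_equiv E \<and> (v, c # t) \<in> comm_equiv E))"
  using levi_cases_if_comm_equiv[OF assms] unfolding levi_cases_def .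

section \<open>Reduced words and the normal form theorem\<close>

abbreviation gg_sym :: "'v set \<Rightarrow> ('v \<times> 'v) set \<Rightarrow>
    (('v \<times> bool) list \<times> ('v \<times> bool) list) set" where
  "gg_sym V E \<equiv> gg_step V E \<union> (gg_step V E)\<inverse>"

definition reduced :: "('a \<times> 'a) set \<Rightarrow> ('a \<times> bool) list \<Rightarrow> bool" where
  "reduced E w \<longleftrightarrow> \<not> (\<exists>p a q. (w, p @ a # inv_letter a # q) \<in> comm_equiv E)"

text \<open>Left multiplication by a generator, acting on reduced words modulo commutation.\<close>
definition letter_act :: "('a \<times> 'a) set \<Rightarrow> 'a \<times> bool \<Rightarrow> ('a \<times> bool) list \<Rightarrow> ('a \<times> bool) list" where
  "letter_act E a w =
     (if \<exists>t. (w, inv_letter a # t) \<in> comm_equiv E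
      then (SOME t. (w, inv_letter a # t) \<in> comm_equiv E) else a # w)"

definition word_act :: "('a \<times> 'a) set \<Rightarrow> ('a \<times> bool) list \<Rightarrow> ('a \<times> bool) list \<Rightarrow> ('a \<times> bool) list" where
  "word_act E u w = foldr (letter_act E) u w"

lemma word_act_simps [simp]:
  "word_act E [] w = w"
  "word_act E (a # u) w = letter_act E a (word_act E u w)"
  "word_act E (p @ q) w = word_act E p (word_act E q w)"
  unfolding word_act_def by simp_all

context
  fixes E :: "('a \<times> 'a) set"
  assumes symE: "sym E" and irrE: "\<forall>v. (v, v) \<notin> E"
begin

lemmas comm_equiv_sym' = comm_equiv_sym[OF symE]

lemmas comm_equiv_Cons_Cons' = comm_equiv_Cons_Cons[OF symE]

lemma comm_equiv_Cons_cancel: "(c # u, c # v) \<in> comm_equiv E \<Longrightarrow> (u, v) \<in> comm_equiv E"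
  using comm_equiv_Cons_Cons' irrE by blast

lemma reduced_comm_equiv: "reduced E w \<Longrightarrow> (w, w') \<in> comm_equiv E \<Longrightarrow> reduced E w'"
  unfolding reduced_def using rtrancl_trans[of w w'] by blast

lemma reduced_ConsD: "reduced E (a # w) \<Longrightarrow> reduced E w"
  unfolding reduced_def
proof (elim contrapos_nn exE)
  fix p b q assume "(w, p @ b # inv_letter b # q) \<in> comm_equiv E"
  then show "\<exists>p b q. (a # w, p @ b # inv_letter b # q) \<in> comm_equiv E"
    by (intro exI[of _ "a # p"] exI[of _ b] exI[of _ q]) (simp add: comm_equiv_Cons)
qed

lemma reduced_Nil: "reduced E []"
  unfolding reduced_def using comm_equiv_sym' comm_equiv_Nil by fastforce

lemma not_reduced: "(w, p @ b # inv_letter b # q) \<in> comm_equiv E \<Longrightarrow> \<not> reduced E w"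
  unfolding reduced_def by blast

lemma not_reduced_Cons:
  assumes "(w, inv_letter a # t) \<in> comm_equiv E"
  shows "\<not> reduced E (a # w)"
  using not_reduced[of "a # w" "[]" a t] comm_equiv_Cons[OF assms] by simp

lemma not_comm_equiv_Cons_cancel_pair:
  assumes w: "reduced E w" and a: "\<not> (\<exists>t. (w, inv_letter a # t) \<in> comm_equiv E)"
  shows "(a # w, b # inv_letter b # q) \<notin> comm_equiv E"
proof
  assume "(a # w, b # inv_letter b # q) \<in> comm_equiv E"
  from comm_equiv_Cons_Cons'[OF this] show False
  proof (elim disjE conjE exE)
    assume "a = b" "(w, inv_letter b # q) \<in> comm_equiv E"
    then show False using a by blast
  next
    fix t assume ab: "(fst a, fst b) \<in> E" and wt: "(w, b # t) \<in> comm_equiv E"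
      and bq: "(inv_letter b # q, a # t) \<in> comm_equiv E"
    from comm_equiv_Cons_Cons'[OF bq] show False
    proof (elim disjE conjE exE)
      assume "inv_letter b = a" then show False using ab irrE by (metis fst_inv_letter)
    next
      fix t' assume "(t, inv_letter b # t') \<in> comm_equiv E"
      then have "(w, [] @ b # inv_letter b # t') \<in> comm_equiv E"
        using rtrancl_trans[OF wt comm_equiv_Cons] by simp
      then show False using w not_reduced by blast
    qed
  qed
qed

lemma reduced_Cons:
  "reduced E w \<Longrightarrow> \<not> (\<exists>t. (w, inv_letter a # t) \<in> comm_equiv E) \<Longrightarrow> reduced E (a # w)"
proof (induction "length w" arbitrary: w rule: less_induct)
  case less
  show ?case unfolding reduced_def
  proof (rule notI, elim exE)
    fix p b q assume aw: "(a # w, p @ b # inv_letter b # q) \<in> comm_equiv E"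
    show False
    proof (cases p)
      case Nil
      then show False using aw not_comm_equiv_Cons_cancel_pair[OF less.prems] by simp
    next
      case (Cons c p')
      with aw have "(a # w, c # (p' @ b # inv_letter b # q)) \<in> comm_equiv E" by simp
      from comm_equiv_Cons_Cons'[OF this] show False
      proof (elim disjE conjE exE)
        assume "a = c" "(w, p' @ b # inv_letter b # q) \<in> comm_equiv E"
        then show False using less.prems(1) not_reduced by blast
      next
        fix t assume ac: "(fst a, fst c) \<in> E" and wt: "(w, c # t) \<in> comm_equiv E"
          and pt: "(p' @ b # inv_letter b # q, a # t) \<in> comm_equiv E"
        have "reduced E t" using reduced_ConsD reduced_comm_equiv less.prems(1) wt by blast
        moreover have "\<not> (\<exists>t'. (t, inv_letter a # t') \<in> comm_equiv E)"
        proof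
          assume "\<exists>t'. (t, inv_letter a # t') \<in> comm_equiv E"
          then obtain t' where "(t, inv_letter a # t') \<in> comm_equiv E" by blast
          moreover have "(fst c, fst (inv_letter a)) \<in> E" using ac symE by (simp add: sym_def)
          ultimately have "(w, inv_letter a # c # t') \<in> comm_equiv E"
            using rtrancl_trans[OF rtrancl_trans[OF wt comm_equiv_Cons] comm_equiv_swap] by blast
          then show False using less.prems(2) by blast
        qed
        moreover have "length t < length w" using comm_equiv_length[OF wt] by simp
        ultimately have "reduced E (a # t)" using less.hyps by blast
        then show False using not_reduced comm_equiv_sym'[OF pt] by blast
      qed
    qed
  qed
qed

lemma letter_act_cancel:
  assumes "(w, inv_letter a # t) \<in> comm_equiv E"
  shows "(letter_act E a w, t) \<in> comm_equiv E"
proof -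
  have ex: "\<exists>t. (w, inv_letter a # t) \<in> comm_equiv E" using assms by blast
  then have "(w, inv_letter a # letter_act E a w) \<in> comm_equiv E"
    unfolding letter_act_def using someI_ex[OF ex] by simp
  then have "(inv_letter a # letter_act E a w, inv_letter a # t) \<in> comm_equiv E"
    using rtrancl_trans[OF comm_equiv_sym' assms] by blast
  then show ?thesis using comm_equiv_Cons_cancel by blast
qed

lemma letter_act_prepend:
  "\<not> (\<exists>t. (w, inv_letter a # t) \<in> comm_equiv E) \<Longrightarrow> letter_act E a w = a # w"
  unfolding letter_act_def by simp

lemma letter_act_comm_equiv:
  assumes ww: "(w, w') \<in> comm_equiv E"
  shows "(letter_act E a w, letter_act E a w') \<in> comm_equiv E"
proof (cases "\<exists>t. (w, inv_letter a # t) \<in> comm_equiv E")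
  case True
  then obtain t where t: "(w, inv_letter a # t) \<in> comm_equiv E" by blast
  have "(w', inv_letter a # t) \<in> comm_equiv E"
    using comm_equiv_sym'[OF ww] t by (rule rtrancl_trans)
  then show ?thesis
    using rtrancl_trans[OF letter_act_cancel[OF t] comm_equiv_sym'[OF letter_act_cancel]] by blast
next
  case False
  moreover have "\<not> (\<exists>t. (w', inv_letter a # t) \<in> comm_equiv E)"
    using False rtrancl_trans[OF ww] by blast
  ultimately show ?thesis using letter_act_prepend comm_equiv_Cons[OF ww] by simp
qed

lemma reduced_letter_act: "reduced E w \<Longrightarrow> reduced E (letter_act E a w)"
proof (cases "\<exists>t. (w, inv_letter a # t) \<in> comm_equiv E")
  case True
  assume w: "reduced E w"
  then obtain t where t: "(w, inv_letter a # t) \<in> comm_equiv E" using True by blast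
  have "reduced E t" using reduced_ConsD reduced_comm_equiv[OF w t] by blast
  then show ?thesis using reduced_comm_equiv comm_equiv_sym'[OF letter_act_cancel[OF t]] by blast
next
  case False
  then show "reduced E w \<Longrightarrow> ?thesis" using letter_act_prepend reduced_Cons by simp
qed

lemma letter_act_inv:
  assumes w: "reduced E w"
  shows "(letter_act E a (letter_act E (inv_letter a) w), w) \<in> comm_equiv E"
proof (cases "\<exists>t. (w, a # t) \<in> comm_equiv E")
  case True
  then obtain t where t: "(w, a # t) \<in> comm_equiv E" by blast
  have "(letter_act E (inv_letter a) w, t) \<in> comm_equiv E"
    using letter_act_cancel[of w "inv_letter a" t] t by simp
  then have "(letter_act E a (letter_act E (inv_letter a) w), letter_act E a t) \<in> comm_equiv E"
    by (rule letter_act_comm_equiv)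
  moreover have "\<not> (\<exists>t'. (t, inv_letter a # t') \<in> comm_equiv E)"
    using reduced_comm_equiv[OF w t] not_reduced_Cons by blast
  then have "letter_act E a t = a # t" by (rule letter_act_prepend)
  ultimately show ?thesis using rtrancl_trans[OF _ comm_equiv_sym'[OF t]] by simp
next
  case False
  then have "letter_act E (inv_letter a) w = inv_letter a # w"
    using letter_act_prepend[of w "inv_letter a"] by simp
  moreover have "(letter_act E a (inv_letter a # w), w) \<in> comm_equiv E"
    by (rule letter_act_cancel) simp
  ultimately show ?thesis by simp
qed

lemma letter_act_commute_half:
  assumes ab: "(fst a, fst b) \<in> E" and tb: "(w, inv_letter b # t) \<in> comm_equiv E"
    and na: "\<not> (\<exists>t. (w, inv_letter a # t) \<in> comm_equiv E)"
  shows "(letter_act E a (letter_act E b w), a # t) \<in> comm_equiv E"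
    and "(letter_act E b (letter_act E a w), a # t) \<in> comm_equiv E"
proof -
  have "\<not> (\<exists>t'. (t, inv_letter a # t') \<in> comm_equiv E)"
  proof
    assume "\<exists>t'. (t, inv_letter a # t') \<in> comm_equiv E"
    then obtain t' where "(t, inv_letter a # t') \<in> comm_equiv E" by blast
    moreover have "(fst (inv_letter b), fst (inv_letter a)) \<in> E" using ab symE by (simp add: sym_def)
    ultimately have "(w, inv_letter a # inv_letter b # t') \<in> comm_equiv E"
      using rtrancl_trans[OF rtrancl_trans[OF tb comm_equiv_Cons] comm_equiv_swap] by blast
    then show False using na by blast
  qed
  then have "letter_act E a t = a # t" by (rule letter_act_prepend)
  then show "(letter_act E a (letter_act E b w), a # t) \<in> comm_equiv E"
    using letter_act_comm_equiv[OF letter_act_cancel[OF tb], of a] by simp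
  have "(a # inv_letter b # t, inv_letter b # a # t) \<in> comm_equiv E"
    using comm_equiv_swap[of a "inv_letter b" E t] ab by simp
  with comm_equiv_Cons[OF tb, of a] have "(a # w, inv_letter b # a # t) \<in> comm_equiv E"
    by (rule rtrancl_trans)
  then show "(letter_act E b (letter_act E a w), a # t) \<in> comm_equiv E"
    using letter_act_prepend[OF na] letter_act_cancel by simp
qed

lemma letter_act_commute_cancel_both:
  assumes neq: "fst a \<noteq> fst b"
    and ta: "(w, inv_letter a # ta) \<in> comm_equiv E" and tb: "(w, inv_letter b # tb) \<in> comm_equiv E"
  shows "(letter_act E a (letter_act E b w), letter_act E b (letter_act E a w)) \<in> comm_equiv E"
proof -
  have "(inv_letter a # ta, inv_letter b # tb) \<in> comm_equiv E"
    using comm_equiv_sym'[OF ta] tb by (rule rtrancl_trans)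
  moreover have "inv_letter a \<noteq> inv_letter b" using neq by (metis fst_inv_letter)
  ultimately obtain t where t1: "(ta, inv_letter b # t) \<in> comm_equiv E"
    and t2: "(tb, inv_letter a # t) \<in> comm_equiv E"
    using comm_equiv_Cons_Cons' by blast
  have "(letter_act E a (letter_act E b w), t) \<in> comm_equiv E"
    using letter_act_comm_equiv[OF letter_act_cancel[OF tb]] letter_act_cancel[OF t2]
    by (rule rtrancl_trans)
  moreover have "(letter_act E b (letter_act E a w), t) \<in> comm_equiv E"
    using letter_act_comm_equiv[OF letter_act_cancel[OF ta]] letter_act_cancel[OF t1]
    by (rule rtrancl_trans)
  ultimately show ?thesis using rtrancl_trans[OF _ comm_equiv_sym'] by blast
qed

lemma letter_act_commute:
  assumes ab: "(fst a, fst b) \<in> E"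
  shows "(letter_act E a (letter_act E b w), letter_act E b (letter_act E a w)) \<in> comm_equiv E"
proof -
  have ba: "(fst b, fst a) \<in> E" using ab symE by (simp add: sym_def)
  have neq: "fst a \<noteq> fst b" using ab irrE by auto
  show ?thesis
  proof (cases "\<exists>t. (w, inv_letter a # t) \<in> comm_equiv E";
         cases "\<exists>t. (w, inv_letter b # t) \<in> comm_equiv E")
    assume "\<exists>t. (w, inv_letter a # t) \<in> comm_equiv E" "\<exists>t. (w, inv_letter b # t) \<in> comm_equiv E"
    then show ?thesis using letter_act_commute_cancel_both[OF neq] by blast
  next
    assume "\<not> (\<exists>t. (w, inv_letter b # t) \<in> comm_equiv E)" "\<exists>t. (w, inv_letter a # t) \<in> comm_equiv E"
    then show ?thesis
      using rtrancl_trans[OF letter_act_commute_half(2)[OF ba]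
          comm_equiv_sym'[OF letter_act_commute_half(1)[OF ba]]]
      by blast
  next
    assume "\<not> (\<exists>t. (w, inv_letter a # t) \<in> comm_equiv E)" "\<exists>t. (w, inv_letter b # t) \<in> comm_equiv E"
    then show ?thesis
      using rtrancl_trans[OF letter_act_commute_half(1)[OF ab]
          comm_equiv_sym'[OF letter_act_commute_half(2)[OF ab]]]
      by blast
  next
    assume na: "\<not> (\<exists>t. (w, inv_letter a # t) \<in> comm_equiv E)"
      and nb: "\<not> (\<exists>t. (w, inv_letter b # t) \<in> comm_equiv E)"
    have "b \<noteq> inv_letter a" "a \<noteq> inv_letter b" using neq by (metis fst_inv_letter)+
    then have "\<not> (\<exists>t. (b # w, inv_letter a # t) \<in> comm_equiv E)"
      and "\<not> (\<exists>t. (a # w, inv_letter b # t) \<in> comm_equiv E)"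
      using comm_equiv_Cons_Cons' na nb by blast+
    then show ?thesis
      using letter_act_prepend na nb comm_equiv_swap[OF ab] by simp
  qed
qed

lemma reduced_word_act: "reduced E w \<Longrightarrow> reduced E (word_act E u w)"
  by (induction u) (auto intro: reduced_letter_act)

lemma word_act_comm_equiv:
  "(w, w') \<in> comm_equiv E \<Longrightarrow> (word_act E u w, word_act E u w') \<in> comm_equiv E"
  by (induction u) (auto intro: letter_act_comm_equiv)

lemma word_act_gg_step:
  assumes "(u1, u2) \<in> gg_step V E" and w: "reduced E w"
  shows "(word_act E u1 w, word_act E u2 w) \<in> comm_equiv E"
  using assms(1) unfolding gg_step_def
proof (elim UnE CollectE exE conjE)
  fix p q x e assume "(u1, u2) = (p @ [(x, e), (x, \<not> e)] @ q, p @ q)"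
  moreover have "(letter_act E (x, e) (letter_act E (inv_letter (x, e)) (word_act E q w)),
      word_act E q w) \<in> comm_equiv E"
    using letter_act_inv reduced_word_act[OF w] by blast
  ultimately show ?thesis using word_act_comm_equiv by simp
next
  fix p q x e y d assume "(u1, u2) = (p @ [(x, e), (y, d)] @ q, p @ [(y, d), (x, e)] @ q)"
    and "(x, y) \<in> E"
  moreover have "(letter_act E (x, e) (letter_act E (y, d) (word_act E q w)),
      letter_act E (y, d) (letter_act E (x, e) (word_act E q w))) \<in> comm_equiv E"
    using letter_act_commute \<open>(x, y) \<in> E\<close> by simp
  ultimately show ?thesis using word_act_comm_equiv by simp
qed

lemma word_act_gg_steps:
  "(u1, u2) \<in> (gg_sym V E)\<^sup>* \<Longrightarrow> reduced E w \<Longrightarrow>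
    (word_act E u1 w, word_act E u2 w) \<in> comm_equiv E"
proof (induction rule: rtrancl_induct)
  case base
  then show ?case by simp
next
  case (step y z)
  then have "(word_act E y w, word_act E z w) \<in> comm_equiv E"
    using word_act_gg_step comm_equiv_sym' by blast
  then show ?case using step.IH[OF step.prems] by (rule rtrancl_trans[rotated])
qed

lemma word_act_reduced_Nil: "reduced E u \<Longrightarrow> (word_act E u [], u) \<in> comm_equiv E"
proof (induction u)
  case Nil
  then show ?case by simp
next
  case (Cons a u)
  then have "(letter_act E a (word_act E u []), letter_act E a u) \<in> comm_equiv E"
    using letter_act_comm_equiv reduced_ConsD by blast
  moreover have "letter_act E a u = a # u"
    using Cons.prems not_reduced_Cons letter_act_prepend by blast
  ultimately show ?case by simp
qed

theorem reduced_gg_steps_Nil: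
  assumes u: "reduced E u" and "(u, []) \<in> (gg_sym V E)\<^sup>*"
  shows "u = []"
proof -
  have "(word_act E u [], []) \<in> comm_equiv E"
    using word_act_gg_steps[OF assms(2) reduced_Nil] by simp
  with comm_equiv_sym'[OF word_act_reduced_Nil[OF u]] have "(u, []) \<in> comm_equiv E"
    by (rule rtrancl_trans)
  then show ?thesis by (rule comm_equiv_Nil)
qed

end

section \<open>The graph group as a quotient of words\<close>

definition inv_word :: "('a \<times> bool) list \<Rightarrow> ('a \<times> bool) list" where
  "inv_word u = rev (map inv_letter u)"

lemma gg_words_append [simp]: "u @ v \<in> gg_words V \<longleftrightarrow> u \<in> gg_words V \<and> v \<in> gg_words V"
  unfolding gg_words_def by auto

lemma inv_word_inv_word [simp]: "inv_word (inv_word u) = u"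
  unfolding inv_word_def by (simp add: rev_map comp_def)

lemma gg_words_Cons [simp]: "a # v \<in> gg_words V \<longleftrightarrow> fst a \<in> V \<and> v \<in> gg_words V"
  unfolding gg_words_def by auto

lemma gg_words_Nil [simp]: "[] \<in> gg_words V"
  unfolding gg_words_def by auto

lemma gg_words_inv_word [simp]: "inv_word u \<in> gg_words V \<longleftrightarrow> u \<in> gg_words V"
  unfolding gg_words_def inv_word_def by (force simp: image_iff)

context
  fixes V :: "'v set" and E :: "('v \<times> 'v) set"
  assumes EV: "E \<subseteq> V \<times> V"
begin

lemma gg_step_words: "(x, y) \<in> gg_step V E \<Longrightarrow> x \<in> gg_words V \<and> y \<in> gg_words V"
  unfolding gg_step_def using EV by auto

lemma gg_sym_rtrancl_words:
  "(x, y) \<in> (gg_sym V E)\<^sup>* \<Longrightarrow> x \<in> gg_words V \<Longrightarrow> y \<in> gg_words V"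
  by (induction rule: rtrancl_induct) (use gg_step_words in blast)+

lemma gg_rel_iff: "(x, y) \<in> gg_rel V E \<longleftrightarrow> x \<in> gg_words V \<and> (x, y) \<in> (gg_sym V E)\<^sup>*"
  unfolding gg_rel_def using gg_sym_rtrancl_words by blast

lemma gg_rel_words: "(x, y) \<in> gg_rel V E \<Longrightarrow> x \<in> gg_words V \<and> y \<in> gg_words V"
  unfolding gg_rel_def by blast

lemma gg_rel_refl: "x \<in> gg_words V \<Longrightarrow> (x, x) \<in> gg_rel V E"
  unfolding gg_rel_iff by blast

lemma gg_rel_sym: "(x, y) \<in> gg_rel V E \<Longrightarrow> (y, x) \<in> gg_rel V E"
proof -
  have "sym ((gg_sym V E)\<^sup>*)" by (rule sym_rtrancl) (auto simp: sym_def)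
  then show "(x, y) \<in> gg_rel V E \<Longrightarrow> (y, x) \<in> gg_rel V E"
    unfolding gg_rel_def by (auto simp: sym_def)
qed

lemma gg_rel_trans: "(x, y) \<in> gg_rel V E \<Longrightarrow> (y, z) \<in> gg_rel V E \<Longrightarrow> (x, z) \<in> gg_rel V E"
  unfolding gg_rel_def by (auto intro: rtrancl_trans)

lemma equiv_gg_rel: "equiv (gg_words V) (gg_rel V E)"
  by (rule equivI)
    (auto simp: refl_on_def sym_def trans_def dest: gg_rel_words intro: gg_rel_refl gg_rel_sym gg_rel_trans)

lemma gg_step_append:
  assumes "(x, y) \<in> gg_step V E" and p: "p \<in> gg_words V" and q: "q \<in> gg_words V"
  shows "(p @ x @ q, p @ y @ q) \<in> gg_step V E"
  using assms(1)[unfolded gg_step_def]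
proof (elim UnE CollectE exE conjE)
  fix a b x' e assume "(x, y) = (a @ [(x', e), (x', \<not> e)] @ b, a @ b)"
    "a \<in> gg_words V" "b \<in> gg_words V" "x' \<in> V"
  then show ?thesis
    unfolding gg_step_def using p q
    by (intro UnI1 CollectI exI[of _ "p @ a"] exI[of _ "b @ q"] exI[of _ x'] exI[of _ e]) auto
next
  fix a b x' e y' d assume "(x, y) = (a @ [(x', e), (y', d)] @ b, a @ [(y', d), (x', e)] @ b)"
    "a \<in> gg_words V" "b \<in> gg_words V" "(x', y') \<in> E"
  then show ?thesis
    unfolding gg_step_def using p q
    by (intro UnI2 CollectI exI[of _ "p @ a"] exI[of _ "b @ q"] exI[of _ x'] exI[of _ e]
        exI[of _ y'] exI[of _ d]) auto
qed

lemma gg_rel_append: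
  assumes r: "(x, y) \<in> gg_rel V E" and p: "p \<in> gg_words V" and q: "q \<in> gg_words V"
  shows "(p @ x @ q, p @ y @ q) \<in> gg_rel V E"
proof -
  from r have x: "x \<in> gg_words V" and xy: "(x, y) \<in> (gg_sym V E)\<^sup>*" unfolding gg_rel_iff by auto
  from xy have "(p @ x @ q, p @ y @ q) \<in> (gg_sym V E)\<^sup>*"
  proof (induction rule: rtrancl_induct)
    case (step y z)
    then have "(p @ y @ q, p @ z @ q) \<in> gg_sym V E" using gg_step_append p q by blast
    then show ?case using step.IH by (rule rtrancl_into_rtrancl[rotated])
  qed simp
  then show ?thesis unfolding gg_rel_iff using x p q by simp
qed

lemma gg_rel_concat:
  assumes "(x, x') \<in> gg_rel V E" and "(y, y') \<in> gg_rel V E"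
  shows "(x @ y, x' @ y') \<in> gg_rel V E"
proof -
  have "(x @ y, x' @ y) \<in> gg_rel V E"
    using gg_rel_append[OF assms(1), of "[]" y] gg_rel_words[OF assms(2)] by simp
  moreover have "(x' @ y, x' @ y') \<in> gg_rel V E"
    using gg_rel_append[OF assms(2), of x' "[]"] gg_rel_words[OF assms(1)] by simp
  ultimately show ?thesis by (rule gg_rel_trans)
qed

lemma gg_rel_cancel: "x \<in> V \<Longrightarrow> ([(x, e), (x, \<not> e)], []) \<in> gg_rel V E"
proof -
  assume x: "x \<in> V"
  have "([] @ [(x, e), (x, \<not> e)] @ [], [] @ []) \<in> gg_step V E"
    unfolding gg_step_def using x
    by (intro UnI1 CollectI exI[of _ "[]"] exI[of _ "[]"] exI[of _ x] exI[of _ e]) auto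
  then show ?thesis unfolding gg_rel_iff using x by auto
qed

lemma gg_rel_commute: "(x, y) \<in> E \<Longrightarrow> ([(x, e), (y, d)], [(y, d), (x, e)]) \<in> gg_rel V E"
proof -
  assume xy: "(x, y) \<in> E"
  have "([] @ [(x, e), (y, d)] @ [], [] @ [(y, d), (x, e)] @ []) \<in> gg_step V E"
    unfolding gg_step_def using xy
    by (intro UnI2 CollectI exI[of _ "[]"] exI[of _ "[]"] exI[of _ x] exI[of _ e] exI[of _ y]
        exI[of _ d]) auto
  then show ?thesis unfolding gg_rel_iff using xy EV by auto
qed

lemma gg_rel_inv_word_right: "u \<in> gg_words V \<Longrightarrow> (u @ inv_word u, []) \<in> gg_rel V E"
proof (induction u)
  case Nil
  then show ?case by (simp add: inv_word_def gg_rel_refl)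
next
  case (Cons a u)
  have "(a # u @ inv_word u @ [inv_letter a], [a, inv_letter a]) \<in> gg_rel V E"
    using gg_rel_append[OF Cons.IH, of "[a]" "[inv_letter a]"] Cons.prems by simp
  moreover have "([a, inv_letter a], []) \<in> gg_rel V E"
    using gg_rel_cancel Cons.prems by (cases a) auto
  ultimately have "(a # u @ inv_word u @ [inv_letter a], []) \<in> gg_rel V E"
    by (rule gg_rel_trans)
  then show ?case by (simp add: inv_word_def)
qed

lemma gg_rel_inv_word_left: "u \<in> gg_words V \<Longrightarrow> (inv_word u @ u, []) \<in> gg_rel V E"
  using gg_rel_inv_word_right[of "inv_word u"] by simp

lemma gg_rel_class_eq_iff:
  "x \<in> gg_words V \<Longrightarrow> gg_rel V E `` {x} = gg_rel V E `` {y} \<longleftrightarrow> (x, y) \<in> gg_rel V E"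
proof
  assume "x \<in> gg_words V" and "gg_rel V E `` {x} = gg_rel V E `` {y}"
  then have "(y, x) \<in> gg_rel V E" using gg_rel_refl by blast
  then show "(x, y) \<in> gg_rel V E" by (rule gg_rel_sym)
qed (rule equiv_class_eq[OF equiv_gg_rel])

lemma carrier_graph_group: "carrier (graph_group V E) = gg_words V // gg_rel V E"
  unfolding graph_group_def by simp

lemma one_graph_group: "\<one>\<^bsub>graph_group V E\<^esub> = gg_rel V E `` {[]}"
  unfolding graph_group_def by simp

lemma mult_graph_group:
  assumes x: "x \<in> gg_words V" and y: "y \<in> gg_words V"
  shows "gg_rel V E `` {x} \<otimes>\<^bsub>graph_group V E\<^esub> gg_rel V E `` {y} = gg_rel V E `` {x @ y}"
proof -
  have "gg_rel V E `` {x' @ y'} = gg_rel V E `` {x @ y}"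
    if "x' \<in> gg_rel V E `` {x}" "y' \<in> gg_rel V E `` {y}" for x' y'
  proof -
    from that have "(x' @ y', x @ y) \<in> gg_rel V E"
      using gg_rel_sym gg_rel_concat by auto
    then show ?thesis using gg_rel_class_eq_iff gg_rel_words by blast
  qed
  moreover have "x \<in> gg_rel V E `` {x}" "y \<in> gg_rel V E `` {y}" using gg_rel_refl x y by auto
  ultimately have "{gg_rel V E `` {x' @ y'} | x' y'. x' \<in> gg_rel V E `` {x} \<and> y' \<in> gg_rel V E `` {y}}
      = {gg_rel V E `` {x @ y}}" by blast
  then show ?thesis unfolding graph_group_def by simp
qed

lemma carrier_graph_groupE:
  assumes "X \<in> carrier (graph_group V E)"
  obtains x where "x \<in> gg_words V" and "X = gg_rel V E `` {x}"
  using assms unfolding carrier_graph_group by (auto elim: quotientE)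

lemma class_in_carrier_graph_group: "x \<in> gg_words V \<Longrightarrow> gg_rel V E `` {x} \<in> carrier (graph_group V E)"
  unfolding carrier_graph_group by (rule quotientI)

lemma group_graph_group: "group (graph_group V E)"
proof (rule groupI)
  fix X assume "X \<in> carrier (graph_group V E)"
  then obtain x where x: "x \<in> gg_words V" and X: "X = gg_rel V E `` {x}"
    by (rule carrier_graph_groupE)
  have "gg_rel V E `` {inv_word x} \<otimes>\<^bsub>graph_group V E\<^esub> X = \<one>\<^bsub>graph_group V E\<^esub>"
    using x X mult_graph_group one_graph_group gg_rel_inv_word_left gg_rel_class_eq_iff by simp
  then show "\<exists>Y\<in>carrier (graph_group V E). Y \<otimes>\<^bsub>graph_group V E\<^esub> X = \<one>\<^bsub>graph_group V E\<^esub>"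
    using x class_in_carrier_graph_group by auto
qed (auto elim!: carrier_graph_groupE
      simp: mult_graph_group one_graph_group class_in_carrier_graph_group)

end

section \<open>Homomorphisms given on generators\<close>

definition subst_word :: "('a \<times> bool \<Rightarrow> ('b \<times> bool) list) \<Rightarrow> ('a \<times> bool) list \<Rightarrow> ('b \<times> bool) list"
  where "subst_word \<sigma> u = concat (map \<sigma> u)"

lemma subst_word_simps [simp]:
  "subst_word \<sigma> [] = []"
  "subst_word \<sigma> (a # u) = \<sigma> a @ subst_word \<sigma> u"
  "subst_word \<sigma> (u @ v) = subst_word \<sigma> u @ subst_word \<sigma> v"
  unfolding subst_word_def by simp_all

definition subst_hom :: "'b set \<Rightarrow> ('b \<times> 'b) set \<Rightarrow> ('a \<times> bool \<Rightarrow> ('b \<times> bool) list) \<Rightarrow>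
    ('a \<times> bool) list set \<Rightarrow> ('b \<times> bool) list set" where
  "subst_hom V' E' \<sigma> X = gg_rel V' E' `` {subst_word \<sigma> (SOME x. x \<in> X)}"

locale word_subst =
  fixes V :: "'a set" and E :: "('a \<times> 'a) set" and V' :: "'b set" and E' :: "('b \<times> 'b) set"
    and \<sigma> :: "'a \<times> bool \<Rightarrow> ('b \<times> bool) list"
  assumes EV: "E \<subseteq> V \<times> V" and EV': "E' \<subseteq> V' \<times> V'"
    and subst_words: "\<And>a. fst a \<in> V \<Longrightarrow> \<sigma> a \<in> gg_words V'"
    and subst_inv: "\<And>a. fst a \<in> V \<Longrightarrow> (\<sigma> a @ \<sigma> (inv_letter a), []) \<in> gg_rel V' E'"
    and subst_commute: "\<And>a b. (fst a, fst b) \<in> E \<Longrightarrow> (\<sigma> a @ \<sigma> b, \<sigma> b @ \<sigma> a) \<in> gg_rel V' E'"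
begin

lemma subst_word_words: "u \<in> gg_words V \<Longrightarrow> subst_word \<sigma> u \<in> gg_words V'"
  by (induction u) (auto intro: subst_words)

lemma subst_word_gg_step:
  assumes "(u, v) \<in> gg_step V E"
  shows "(subst_word \<sigma> u, subst_word \<sigma> v) \<in> gg_rel V' E'"
  using assms unfolding gg_step_def
proof (elim UnE CollectE exE conjE)
  fix a b x e assume uv: "(u, v) = (a @ [(x, e), (x, \<not> e)] @ b, a @ b)" and a: "a \<in> gg_words V"
    and b: "b \<in> gg_words V" and "x \<in> V"
  then have "(\<sigma> (x, e) @ \<sigma> (inv_letter (x, e)), []) \<in> gg_rel V' E'"
    using subst_inv[of "(x, e)"] by simp
  from gg_rel_append[OF EV' this subst_word_words[OF a] subst_word_words[OF b]]
  show ?thesis using uv by simp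
next
  fix a b x e y d assume uv: "(u, v) = (a @ [(x, e), (y, d)] @ b, a @ [(y, d), (x, e)] @ b)"
    and a: "a \<in> gg_words V" and b: "b \<in> gg_words V" and "(x, y) \<in> E"
  then have "(\<sigma> (x, e) @ \<sigma> (y, d), \<sigma> (y, d) @ \<sigma> (x, e)) \<in> gg_rel V' E'"
    using subst_commute by simp
  from gg_rel_append[OF EV' this subst_word_words[OF a] subst_word_words[OF b]]
  show ?thesis using uv by simp
qed

lemma subst_word_gg_rel:
  assumes "(u, v) \<in> gg_rel V E"
  shows "(subst_word \<sigma> u, subst_word \<sigma> v) \<in> gg_rel V' E'"
proof -
  from assms have u: "u \<in> gg_words V" and uv: "(u, v) \<in> (gg_sym V E)\<^sup>*"
    using gg_rel_iff[OF EV] by auto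
  from uv show ?thesis
  proof (induction rule: rtrancl_induct)
    case base
    then show ?case using gg_rel_refl[OF EV' subst_word_words[OF u]] .
  next
    case (step y z)
    then have "(subst_word \<sigma> y, subst_word \<sigma> z) \<in> gg_rel V' E'"
      using subst_word_gg_step gg_rel_sym[OF EV'] by blast
    then show ?case using gg_rel_trans[OF EV' step.IH] by blast
  qed
qed

lemma subst_hom_class:
  assumes x: "x \<in> gg_words V"
  shows "subst_hom V' E' \<sigma> (gg_rel V E `` {x}) = gg_rel V' E' `` {subst_word \<sigma> x}"
proof -
  have ex: "\<exists>y. y \<in> gg_rel V E `` {x}" using gg_rel_refl[OF EV x] by blast
  have "(x, SOME y. y \<in> gg_rel V E `` {x}) \<in> gg_rel V E" using someI_ex[OF ex] by simp
  then have "(subst_word \<sigma> x, subst_word \<sigma> (SOME y. y \<in> gg_rel V E `` {x})) \<in> gg_rel V' E'"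
    by (rule subst_word_gg_rel)
  then show ?thesis
    unfolding subst_hom_def using gg_rel_class_eq_iff[OF EV' subst_word_words[OF x]] by blast
qed

lemma subst_hom_hom: "subst_hom V' E' \<sigma> \<in> hom (graph_group V E) (graph_group V' E')"
  by (rule homI)
    (auto elim!: carrier_graph_groupE[OF EV] simp: subst_hom_class subst_word_words
      class_in_carrier_graph_group[OF EV'] mult_graph_group[OF EV] mult_graph_group[OF EV'])

end

section \<open>Transfer of universal sentences\<close>

fun form_terms :: "qf_form \<Rightarrow> gterm set" where
  "form_terms (FEq t u) = {t, u}"
| "form_terms FFalse = {}"
| "form_terms (FNot f) = form_terms f"
| "form_terms (FAnd f g) = form_terms f \<union> form_terms g"
| "form_terms (FOr f g) = form_terms f \<union> form_terms g"

lemma finite_form_terms: "finite (form_terms \<phi>)"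
  by (induction \<phi>) auto

lemma geval_closed: "group H \<Longrightarrow> \<forall>n. s n \<in> carrier H \<Longrightarrow> geval H s t \<in> carrier H"
  by (induction t) (auto simp: group.is_monoid monoid.m_closed)

lemma geval_hom:
  assumes "group_hom H G f" and s: "\<forall>n. s n \<in> carrier H"
  shows "geval G (f \<circ> s) t = f (geval H s t)"
proof (induction t)
  case (GInv t)
  then show ?case
    using group_hom.hom_inv[OF assms(1)] geval_closed[OF group_hom.axioms(1)[OF assms(1)] s]
    by simp
qed (use assms geval_closed[OF group_hom.axioms(1)[OF assms(1)] s] in
      \<open>auto simp: group_hom.hom_one group_hom.hom_mult\<close>)

lemma fsat_hom_iff:
  assumes f: "group_hom H G f" and s: "\<forall>n. s n \<in> carrier H"
    and inj: "inj_on f (geval H s ` form_terms \<phi>)"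
  shows "fsat G (f \<circ> s) \<phi> \<longleftrightarrow> fsat H s \<phi>"
  using inj
proof (induction \<phi>)
  case (FEq t u)
  have "f (geval H s t) = f (geval H s u) \<longleftrightarrow> geval H s t = geval H s u"
    by (rule inj_on_eq_iff[OF FEq.prems]) auto
  then show ?case by (simp only: fsat.simps geval_hom[OF f s])
next
  case (FAnd \<phi> \<psi>)
  then show ?case by (auto intro: inj_on_subset)
next
  case (FOr \<phi> \<psi>)
  then show ?case by (auto intro: inj_on_subset)
qed auto

lemma sat_universal_if_locally_embeds:
  assumes H: "group H" and G: "group G"
    and embeds: "\<And>S. finite S \<Longrightarrow> S \<subseteq> carrier H \<Longrightarrow> \<exists>f. f \<in> hom H G \<and> inj_on f S"
    and sat: "sat_universal G \<phi>"
  shows "sat_universal H \<phi>"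
  unfolding sat_universal_def
proof (intro allI impI)
  fix s :: "nat \<Rightarrow> _" assume s: "\<forall>n. s n \<in> carrier H"
  have "geval H s ` form_terms \<phi> \<subseteq> carrier H" using geval_closed[OF H s] by blast
  then obtain f where f: "f \<in> hom H G" and inj: "inj_on f (geval H s ` form_terms \<phi>)"
    using embeds finite_form_terms by blast
  have fG: "group_hom H G f" using H G f by (simp add: group_hom_def group_hom_axioms_def)
  have "\<forall>n. (f \<circ> s) n \<in> carrier G" using s f by (auto simp: hom_def)
  then have "fsat G (f \<circ> s) \<phi>" using sat unfolding sat_universal_def by blast
  then show "fsat H s \<phi>" using fsat_hom_iff[OF fG s inj] by simp
qed

lemma ex_inj_on_if_eventually_nontrivial:
  assumes G: "group G" and H: "group H" and f: "\<And>N. f N \<in> hom G H"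
    and S: "finite S" "S \<subseteq> carrier G"
    and nontrivial: "\<And>g. g \<in> carrier G \<Longrightarrow> g \<noteq> \<one>\<^bsub>G\<^esub> \<Longrightarrow> eventually (\<lambda>N. f N g \<noteq> \<one>\<^bsub>H\<^esub>) sequentially"
  shows "\<exists>N. inj_on (f N) S"
proof -
  interpret G: group G by (rule G)
  define D where "D = (\<lambda>(x, y). x \<otimes>\<^bsub>G\<^esub> inv\<^bsub>G\<^esub> y) ` (S \<times> S - Id)"
  have "g \<in> carrier G \<and> g \<noteq> \<one>\<^bsub>G\<^esub>" if "g \<in> D" for g
  proof -
    from that obtain x y where xy: "x \<in> S" "y \<in> S" "x \<noteq> y"
      and g: "g = x \<otimes>\<^bsub>G\<^esub> inv\<^bsub>G\<^esub> y"
      unfolding D_def by auto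
    from xy(1,2) have "x \<in> carrier G" "y \<in> carrier G" using S(2) by auto
    then show ?thesis using xy(3) g G.inv_solve_right'[of "\<one>\<^bsub>G\<^esub>" x y] by simp
  qed
  then have "\<forall>g\<in>D. eventually (\<lambda>N. f N g \<noteq> \<one>\<^bsub>H\<^esub>) sequentially"
    using nontrivial by blast
  moreover have "finite D" unfolding D_def using S(1) by simp
  ultimately have "eventually (\<lambda>N. \<forall>g\<in>D. f N g \<noteq> \<one>\<^bsub>H\<^esub>) sequentially"
    by (intro eventually_ball_finite)
  then obtain N where N: "\<forall>g\<in>D. f N g \<noteq> \<one>\<^bsub>H\<^esub>"
    unfolding eventually_sequentially by blast
  have fG: "group_hom G H (f N)"
    using G H f by (simp add: group_hom_def group_hom_axioms_def)
  have "inj_on (f N) S"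
  proof (rule inj_onI, rule ccontr)
    fix x y assume xy: "x \<in> S" "y \<in> S" "f N x = f N y" "x \<noteq> y"
    then have x: "x \<in> carrier G" and y: "y \<in> carrier G" using S(2) by auto
    have "f N (x \<otimes>\<^bsub>G\<^esub> inv\<^bsub>G\<^esub> y) = f N y \<otimes>\<^bsub>H\<^esub> inv\<^bsub>H\<^esub> f N y"
      using group_hom.hom_mult[OF fG x G.inv_closed[OF y]] group_hom.hom_inv[OF fG y] xy(3)
      by simp
    also have "\<dots> = \<one>\<^bsub>H\<^esub>" using group.r_inv[OF H group_hom.hom_closed[OF fG y]] .
    finally have "f N (x \<otimes>\<^bsub>G\<^esub> inv\<^bsub>G\<^esub> y) = \<one>\<^bsub>H\<^esub>" .
    moreover have "x \<otimes>\<^bsub>G\<^esub> inv\<^bsub>G\<^esub> y \<in> D" unfolding D_def using xy by auto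
    ultimately show False using N by blast
  qed
  then show ?thesis ..
qed

section \<open>Powers of generators and syllable words\<close>

definition letter_sign :: "bool \<Rightarrow> int" where
  "letter_sign e = (if e then 1 else -1)"

definition pow_word :: "'a \<Rightarrow> int \<Rightarrow> ('a \<times> bool) list" where
  "pow_word x n = replicate (nat \<bar>n\<bar>) (x, 0 \<le> n)"

lemma pow_word_0 [simp]: "pow_word x 0 = []"
  unfolding pow_word_def by simp

lemma pow_word_eq_Nil_iff: "pow_word x n = [] \<longleftrightarrow> n = 0"
  unfolding pow_word_def by auto

lemma pow_word_words: "x \<in> V \<Longrightarrow> pow_word x n \<in> gg_words V"
  unfolding pow_word_def gg_words_def by auto

lemma fst_in_set_pow_word: "z \<in> set (pow_word x n) \<Longrightarrow> fst z = x"
  unfolding pow_word_def by (auto split: if_splits)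

lemma pow_word_letter_sign: "pow_word x (letter_sign e) = [(x, e)]"
  unfolding pow_word_def letter_sign_def by auto

lemma pow_word_unfold:
  assumes "n \<noteq> 0"
  shows "pow_word x n = (x, 0 < n) # pow_word x (n - letter_sign (0 < n))"
proof (cases "0 < n")
  case True
  then have "nat \<bar>n\<bar> = Suc (nat \<bar>n - 1\<bar>)" by simp
  then show ?thesis using True unfolding pow_word_def letter_sign_def by simp
next
  case False
  then have "nat \<bar>n\<bar> = Suc (nat \<bar>n + 1\<bar>)" and "\<not> 0 \<le> n + 1 \<or> n + 1 = 0" using assms by auto
  then show ?thesis using False assms unfolding pow_word_def letter_sign_def by auto
qed

context
  fixes V :: "'v set" and E :: "('v \<times> 'v) set"
  assumes EV: "E \<subseteq> V \<times> V"
begin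

lemma gg_rel_Cons_pow_word:
  assumes x: "x \<in> V"
  shows "((x, e) # pow_word x n, pow_word x (n + letter_sign e)) \<in> gg_rel V E"
proof (cases "(e \<and> 0 \<le> n) \<or> (\<not> e \<and> n \<le> 0)")
  case True
  then have "nat \<bar>n + letter_sign e\<bar> = Suc (nat \<bar>n\<bar>)"
    and "replicate (nat \<bar>n\<bar>) (x, 0 \<le> n) = replicate (nat \<bar>n\<bar>) (x, 0 \<le> n + letter_sign e)"
    by (auto simp: letter_sign_def)
  then have "(x, e) # pow_word x n = pow_word x (n + letter_sign e)"
    using True unfolding pow_word_def letter_sign_def by auto
  then show ?thesis using gg_rel_refl[OF EV pow_word_words[OF x]] by metis
next
  case False
  then have "n \<noteq> 0" and "(0 < n) = (\<not> e)" by auto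
  then have "pow_word x n = (x, \<not> e) # pow_word x (n + letter_sign e)"
    using pow_word_unfold[of n x] by (cases e) (auto simp: letter_sign_def)
  moreover have "([] @ [(x, e), (x, \<not> e)] @ pow_word x (n + letter_sign e),
      [] @ [] @ pow_word x (n + letter_sign e)) \<in> gg_rel V E"
    by (rule gg_rel_append[OF EV gg_rel_cancel[OF EV x]]) (auto simp: pow_word_words x)
  ultimately show ?thesis by simp
qed

lemma gg_rel_pow_word_add:
  assumes x: "x \<in> V"
  shows "(pow_word x a @ pow_word x b, pow_word x (a + b)) \<in> gg_rel V E"
proof (induction "nat \<bar>a\<bar>" arbitrary: a)
  case 0
  then show ?case using gg_rel_refl[OF EV pow_word_words[OF x]] by simp
next
  case (Suc k)
  then have a0: "a \<noteq> 0" by auto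
  define a' where "a' = a - letter_sign (0 < a)"
  have "k = nat \<bar>a'\<bar>" using Suc(2) a0 unfolding a'_def letter_sign_def by auto
  then have "([(x, 0 < a)] @ (pow_word x a' @ pow_word x b) @ [],
      [(x, 0 < a)] @ pow_word x (a' + b) @ []) \<in> gg_rel V E"
    using Suc(1) by (intro gg_rel_append[OF EV]) (simp_all add: x)
  moreover have "((x, 0 < a) # pow_word x (a' + b), pow_word x (a' + b + letter_sign (0 < a)))
      \<in> gg_rel V E"
    by (rule gg_rel_Cons_pow_word[OF x])
  ultimately have "((x, 0 < a) # pow_word x a' @ pow_word x b, pow_word x (a + b)) \<in> gg_rel V E"
    using gg_rel_trans[OF EV] unfolding a'_def by fastforce
  then show ?case using pow_word_unfold[OF a0, of x] unfolding a'_def by simp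
qed

lemma gg_rel_concat_replicate_pow_word:
  assumes x: "x \<in> V"
  shows "(concat (replicate n (pow_word x a)), pow_word x (int n * a)) \<in> gg_rel V E"
proof (induction n)
  case 0
  then show ?case using gg_rel_refl[OF EV] by simp
next
  case (Suc n)
  have "(pow_word x a @ concat (replicate n (pow_word x a)), pow_word x a @ pow_word x (int n * a))
      \<in> gg_rel V E"
    by (rule gg_rel_concat[OF EV gg_rel_refl[OF EV pow_word_words[OF x]] Suc])
  moreover have "(pow_word x a @ pow_word x (int n * a), pow_word x (a + int n * a)) \<in> gg_rel V E"
    by (rule gg_rel_pow_word_add[OF x])
  ultimately show ?case using gg_rel_trans[OF EV] by (simp add: algebra_simps)
qed

lemma gg_rel_commute_Cons:
  "\<forall>d\<in>set q. (fst c, fst d) \<in> E \<Longrightarrow> q \<in> gg_words V \<Longrightarrow> fst c \<in> V \<Longrightarrow>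
    (c # q, q @ [c]) \<in> gg_rel V E"
proof (induction q)
  case Nil
  then show ?case using gg_rel_refl[OF EV] by simp
next
  case (Cons d q)
  then have "(fst c, fst d) \<in> E" by simp
  then have "([] @ [c, d] @ q, [] @ [d, c] @ q) \<in> gg_rel V E"
    using gg_rel_append[OF EV gg_rel_commute[OF EV, of "fst c" "fst d" "snd c" "snd d"], of "[]" q]
      Cons.prems by simp
  moreover have "([d] @ (c # q) @ [], [d] @ (q @ [c]) @ []) \<in> gg_rel V E"
    by (rule gg_rel_append[OF EV Cons.IH]) (use Cons.prems in auto)
  ultimately show ?case using gg_rel_trans[OF EV] by simp
qed

lemma gg_rel_commute_words:
  "\<forall>c\<in>set p. \<forall>d\<in>set q. (fst c, fst d) \<in> E \<Longrightarrow> p \<in> gg_words V \<Longrightarrow> q \<in> gg_words V \<Longrightarrow>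
    (p @ q, q @ p) \<in> gg_rel V E"
proof (induction p)
  case Nil
  then show ?case using gg_rel_refl[OF EV] by simp
next
  case (Cons c p)
  have "([c] @ (p @ q) @ [], [c] @ (q @ p) @ []) \<in> gg_rel V E"
    by (rule gg_rel_append[OF EV Cons.IH]) (use Cons.prems in auto)
  moreover have "([] @ (c # q) @ p, [] @ (q @ [c]) @ p) \<in> gg_rel V E"
    by (rule gg_rel_append[OF EV gg_rel_commute_Cons]) (use Cons.prems in auto)
  ultimately show ?case using gg_rel_trans[OF EV] by simp
qed

end

text \<open>A syllable word \<open>x\<^sub>1\<^bsup>n\<^sub>1\<^esup> \<cdots> x\<^sub>k\<^bsup>n\<^sub>k\<^esup>\<close> is given by its list of
  pairs \<open>(x\<^sub>i, n\<^sub>i)\<close>; the same lists with exponents in \<open>\<int>\<^sup>m\<close> describe words of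
  the inflation.\<close>
definition syllable_word :: "('a \<times> int) list \<Rightarrow> ('a \<times> bool) list" where
  "syllable_word L = concat (map (\<lambda>(v, n). pow_word v n) L)"

lemma syllable_word_simps [simp]:
  "syllable_word [] = []"
  "syllable_word ((v, n) # L) = pow_word v n @ syllable_word L"
  unfolding syllable_word_def by simp_all

definition front_reachable :: "('a \<times> 'a) set \<Rightarrow> 'a \<Rightarrow> ('a \<times> 'c) list \<Rightarrow> bool" where
  "front_reachable E v L \<longleftrightarrow>
     (\<exists>A y B. L = A @ y # B \<and> fst y = v \<and> (\<forall>z\<in>set A. (fst z, v) \<in> E))"

fun syllables_reduced :: "('a \<times> 'a) set \<Rightarrow> ('a \<times> 'c) list \<Rightarrow> bool" where
  "syllables_reduced E [] = True"
| "syllables_reduced E (x # L) = (syllables_reduced E L \<and> \<not> front_reachable E (fst x) L)"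

lemma front_reachable_Nil [simp]: "\<not> front_reachable E v []"
  unfolding front_reachable_def by simp

lemma front_reachable_Cons:
  "front_reachable E v (y # L) \<longleftrightarrow> fst y = v \<or> ((fst y, v) \<in> E \<and> front_reachable E v L)"
proof
  assume "front_reachable E v (y # L)"
  then obtain A z B where h: "y # L = A @ z # B" "fst z = v" "\<forall>z\<in>set A. (fst z, v) \<in> E"
    unfolding front_reachable_def by blast
  show "fst y = v \<or> ((fst y, v) \<in> E \<and> front_reachable E v L)"
  proof (cases A)
    case (Cons a A')
    then have "L = A' @ z # B" and "(fst y, v) \<in> E" using h by auto
    moreover from this have "front_reachable E v L"
      unfolding front_reachable_def using h Cons by (intro exI[of _ A'] exI[of _ z] exI[of _ B]) auto
    ultimately show ?thesis by simp
  qed (use h in simp)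
next
  assume "fst y = v \<or> ((fst y, v) \<in> E \<and> front_reachable E v L)"
  then show "front_reachable E v (y # L)"
  proof
    assume "fst y = v"
    then show ?thesis unfolding front_reachable_def by (intro exI[of _ "[]"]) auto
  next
    assume "(fst y, v) \<in> E \<and> front_reachable E v L"
    then obtain A z B where "L = A @ z # B" "fst z = v" "\<forall>z\<in>set A. (fst z, v) \<in> E" "(fst y, v) \<in> E"
      unfolding front_reachable_def by blast
    then show ?thesis unfolding front_reachable_def by (intro exI[of _ "y # A"]) auto
  qed
qed

lemma front_reachable_map:
  "(\<And>x. fst (g x) = fst x) \<Longrightarrow> front_reachable E v (map g L) = front_reachable E v L"
  by (induction L) (auto simp: front_reachable_Cons)

lemma syllables_reduced_map:
  "(\<And>x. fst (g x) = fst x) \<Longrightarrow> syllables_reduced E (map g L) = syllables_reduced E L"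
  by (induction L) (auto simp: front_reachable_map)

lemma not_syllables_reduced:
  "\<not> syllables_reduced E L \<Longrightarrow>
    \<exists>P x A y B. L = P @ x # A @ y # B \<and> fst y = fst x \<and> (\<forall>z\<in>set A. (fst z, fst x) \<in> E)"
proof (induction L)
  case (Cons x L)
  show ?case
  proof (cases "syllables_reduced E L")
    case True
    then have "front_reachable E (fst x) L" using Cons.prems by simp
    then obtain A y B where "L = A @ y # B" "fst y = fst x" "\<forall>z\<in>set A. (fst z, fst x) \<in> E"
      unfolding front_reachable_def by blast
    then show ?thesis by (intro exI[of _ "[]"] exI[of _ x] exI[of _ A] exI[of _ y] exI[of _ B]) auto
  next
    case False
    then obtain P x' A y B where "L = P @ x' # A @ y # B" "fst y = fst x'"
      "\<forall>z\<in>set A. (fst z, fst x') \<in> E"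
      using Cons.IH by blast
    then show ?thesis by (intro exI[of _ "x # P"] exI[of _ x'] exI[of _ A] exI[of _ y] exI[of _ B]) auto
  qed
qed simp

context
  fixes E :: "('a \<times> 'a) set"
  assumes symE: "sym E" and irrE: "\<forall>v. (v, v) \<notin> E"
begin

lemma comm_equiv_append_Cons_cases:
  "(p @ X, b # t) \<in> comm_equiv E \<Longrightarrow>
    (\<exists>P c Q. p = P @ c # Q \<and> fst c = fst b \<and> (\<forall>z\<in>set P. (fst z, fst b) \<in> E)) \<or>
    ((\<forall>c\<in>set p. (fst c, fst b) \<in> E) \<and> (\<exists>t'. (X, b # t') \<in> comm_equiv E))"
proof (induction p arbitrary: t)
  case Nil
  then show ?case by auto
next
  case (Cons c p)
  then have "(c # (p @ X), b # t) \<in> comm_equiv E" by simp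
  from comm_equiv_Cons_Cons[OF symE this] show ?case
  proof (elim disjE conjE exE)
    assume "c = b"
    then show ?thesis by (intro disjI1 exI[of _ "[]"]) auto
  next
    fix t' assume cb: "(fst c, fst b) \<in> E" and pX: "(p @ X, b # t') \<in> comm_equiv E"
    from Cons.IH[OF pX] show ?thesis
    proof (elim disjE conjE exE)
      fix P c' Q assume "p = P @ c' # Q" "fst c' = fst b" "\<forall>z\<in>set P. (fst z, fst b) \<in> E"
      then show ?thesis using cb by (intro disjI1 exI[of _ "c # P"]) auto
    qed (use cb in auto)
  qed
qed

lemma front_reachable_if_comm_equiv_Cons:
  "(syllable_word L, b # t) \<in> comm_equiv E \<Longrightarrow> \<forall>(v, n)\<in>set L. n \<noteq> 0 \<Longrightarrow>
    front_reachable E (fst b) L"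
proof (induction L arbitrary: t)
  case Nil
  then show ?case using comm_equiv_length by fastforce
next
  case (Cons vn L)
  obtain v n where vn: "vn = (v, n)" by (cases vn)
  have "(pow_word v n @ syllable_word L, b # t) \<in> comm_equiv E" using Cons.prems vn by simp
  from comm_equiv_append_Cons_cases[OF this] show ?case
  proof (elim disjE conjE exE)
    fix P c Q assume "pow_word v n = P @ c # Q" "fst c = fst b"
    then have "v = fst b" using fst_in_set_pow_word[of c v n] by auto
    then show ?thesis using vn by (simp add: front_reachable_Cons)
  next
    fix t' assume adj: "\<forall>c\<in>set (pow_word v n). (fst c, fst b) \<in> E"
      and "(syllable_word L, b # t') \<in> comm_equiv E"
    then have "front_reachable E (fst b) L" using Cons by auto
    moreover have "n \<noteq> 0" using Cons.prems vn by auto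
    then have "pow_word v n \<noteq> []" by (simp add: pow_word_eq_Nil_iff)
    then have "(v, fst b) \<in> E" using adj fst_in_set_pow_word by (metis last_in_set)
    ultimately show ?thesis using vn by (simp add: front_reachable_Cons)
  qed
qed

lemma reduced_syllable_word:
  "syllables_reduced E L \<Longrightarrow> \<forall>(v, n)\<in>set L. n \<noteq> 0 \<Longrightarrow> reduced E (syllable_word L)"
proof (induction L)
  case Nil
  then show ?case using reduced_Nil[OF symE irrE] by simp
next
  case (Cons vn L)
  obtain v n where vn: "vn = (v, n)" by (cases vn)
  have nz: "\<forall>(v, n)\<in>set L. n \<noteq> 0" using Cons.prems by auto
  define a where "a = (v, 0 \<le> n)"
  have "reduced E (replicate j a @ syllable_word L)" for j
  proof (induction j)
    case 0
    then show ?case using Cons by (auto simp: vn)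
  next
    case (Suc j)
    have "\<not> (\<exists>t. (replicate j a @ syllable_word L, inv_letter a # t) \<in> comm_equiv E)"
    proof
      assume "\<exists>t. (replicate j a @ syllable_word L, inv_letter a # t) \<in> comm_equiv E"
      then obtain t where t: "(replicate j a @ syllable_word L, inv_letter a # t) \<in> comm_equiv E"
        by blast
      show False
      proof (cases j)
        case 0
        then have "front_reachable E v L"
          using t front_reachable_if_comm_equiv_Cons nz a_def by fastforce
        then show False using Cons.prems vn by simp
      next
        case (Suc j')
        then have "(a # (replicate j' a @ syllable_word L), inv_letter a # t) \<in> comm_equiv E"
          using t by simp
        from comm_equiv_Cons_Cons[OF symE this] show False using irrE by auto
      qed
    qed
    then show ?case using reduced_Cons[OF symE irrE Suc.IH] by simp
  qed
  from this[of "nat \<bar>n\<bar>"] show ?case unfolding vn a_def by (simp add: pow_word_def)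
qed

end

section \<open>Normal forms in the inflation\<close>

definition copy_exponent :: "(('v \<times> nat) \<times> bool) list \<Rightarrow> nat \<Rightarrow> int" where
  "copy_exponent u i = sum_list (map (\<lambda>z. if snd (fst z) = i then letter_sign (snd z) else 0) u)"

lemma copy_exponent_simps [simp]:
  "copy_exponent [] i = 0"
  "copy_exponent (a # u) i = (if snd (fst a) = i then letter_sign (snd a) else 0) + copy_exponent u i"
  "copy_exponent (u @ u') i = copy_exponent u i + copy_exponent u' i"
  unfolding copy_exponent_def by simp_all

lemma copy_exponent_pow_word: "copy_exponent (pow_word (v, j) k) i = (if i = j then k else 0)"
  unfolding copy_exponent_def pow_word_def by (auto simp: sum_list_replicate letter_sign_def)

definition copies_word :: "'v \<Rightarrow> (nat \<Rightarrow> int) \<Rightarrow> nat list \<Rightarrow> (('v \<times> nat) \<times> bool) list" where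
  "copies_word v c is = concat (map (\<lambda>i. pow_word (v, i) (c i)) is)"

lemma copies_word_simps [simp]:
  "copies_word v c [] = []"
  "copies_word v c (i # is) = pow_word (v, i) (c i) @ copies_word v c is"
  "copies_word v c (is @ js) = copies_word v c is @ copies_word v c js"
  unfolding copies_word_def by simp_all

lemma copies_word_cong: "\<forall>i\<in>set is. c i = d i \<Longrightarrow> copies_word v c is = copies_word v d is"
  unfolding copies_word_def by (induction "is") auto

lemma copies_word_zero: "\<forall>i\<in>set is. c i = 0 \<Longrightarrow> copies_word v c is = []"
  unfolding copies_word_def by (induction "is") auto

lemma fst_in_set_copies_word: "z \<in> set (copies_word v c is) \<Longrightarrow> \<exists>i\<in>set is. fst z = (v, i)"
  unfolding copies_word_def using fst_in_set_pow_word by fastforce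

lemma copy_exponent_copies_word:
  "distinct is \<Longrightarrow> copy_exponent (copies_word v c is) i = (if i \<in> set is then c i else 0)"
  by (induction "is") (auto simp: copy_exponent_pow_word)

lemma upt_split_at: "1 \<le> i \<Longrightarrow> i \<le> m \<Longrightarrow> [1..<Suc m] = [1..<i] @ i # [Suc i..<Suc m]"
  by (metis le_SucI upt_add_eq_append upt_conv_Cons le_add_diff_inverse le_imp_less_Suc)

locale inflation =
  fixes V :: "'v set" and E :: "('v \<times> 'v) set" and m :: nat
  assumes EV: "E \<subseteq> V \<times> V" and symE: "sym E" and irrE: "\<forall>v. (v, v) \<notin> E" and m_pos: "1 \<le> m"
begin

abbreviation "Vm \<equiv> infl_vertices V m"
abbreviation "Em \<equiv> infl_edges V E m"

lemma infl_edges_subset: "Em \<subseteq> Vm \<times> Vm"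
  unfolding infl_edges_def infl_vertices_def using EV by auto

lemma infl_edges_copies:
  "v \<in> V \<Longrightarrow> i \<in> {1..m} \<Longrightarrow> j \<in> {1..m} \<Longrightarrow> i \<noteq> j \<Longrightarrow> ((v, i), (v, j)) \<in> Em"
  unfolding infl_edges_def by blast

lemma infl_edges_adjacent:
  "(v, w) \<in> E \<Longrightarrow> i \<in> {1..m} \<Longrightarrow> k \<in> {1..m} \<Longrightarrow> ((v, i), (w, k)) \<in> Em"
  unfolding infl_edges_def using irrE by blast

lemma infl_edgesE:
  assumes "((v, i), (w, k)) \<in> Em"
  obtains "v = w" "v \<in> V" | "(v, w) \<in> E"
  using assms unfolding infl_edges_def by blast

lemma mem_infl_vertices [simp]: "(v, i) \<in> Vm \<longleftrightarrow> v \<in> V \<and> i \<in> {1..m}"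
  unfolding infl_vertices_def by auto

text \<open>The syllable \<open>v\<^sub>1\<^bsup>c 1\<^esup> \<cdots> v\<^sub>m\<^bsup>c m\<^esup>\<close>; it represents the element \<open>c\<close> of the
  free abelian group on the copies of \<open>v\<close>.\<close>
definition clique_syllable :: "'v \<Rightarrow> (nat \<Rightarrow> int) \<Rightarrow> (('v \<times> nat) \<times> bool) list" where
  "clique_syllable v c = copies_word v c [1..<Suc m]"

lemma copies_word_words: "v \<in> V \<Longrightarrow> set is \<subseteq> {1..m} \<Longrightarrow> copies_word v c is \<in> gg_words Vm"
  by (induction "is") (auto intro: pow_word_words)

lemma clique_syllable_words: "v \<in> V \<Longrightarrow> clique_syllable v c \<in> gg_words Vm"
  unfolding clique_syllable_def by (rule copies_word_words) auto

lemma fst_in_set_clique_syllable: "z \<in> set (clique_syllable v c) \<Longrightarrow> \<exists>i\<in>{1..m}. fst z = (v, i)"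
  using fst_in_set_copies_word[of z v c "[1..<Suc m]"] unfolding clique_syllable_def by auto

lemma clique_syllable_zero: "\<forall>i\<in>{1..m}. c i = 0 \<Longrightarrow> clique_syllable v c = []"
  unfolding clique_syllable_def by (rule copies_word_zero) auto

lemma clique_syllable_cong: "\<forall>i\<in>{1..m}. c i = d i \<Longrightarrow> clique_syllable v c = clique_syllable v d"
  unfolding clique_syllable_def by (rule copies_word_cong) auto

lemma clique_syllable_single:
  assumes "i \<in> {1..m}"
  shows "clique_syllable v (\<lambda>j. if j = i then letter_sign e else 0) = [((v, i), e)]"
  using assms unfolding clique_syllable_def
  by (subst upt_split_at[of i m]) (auto simp: copies_word_zero pow_word_letter_sign)

lemmas gg_rel_infl_trans [trans] = gg_rel_trans[OF infl_edges_subset]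

lemma gg_rel_Cons_clique_syllable:
  assumes v: "v \<in> V" and i: "i \<in> {1..m}"
  shows "(((v, i), e) # clique_syllable v c,
          clique_syllable v (\<lambda>j. (if j = i then letter_sign e else 0) + c j)) \<in> gg_rel Vm Em"
proof -
  define P where "P = copies_word v c [1..<i]"
  define Q where "Q = copies_word v c [Suc i..<Suc m]"
  define c' where "c' = (\<lambda>j. (if j = i then letter_sign e else 0) + c j)"
  have split: "[1..<Suc m] = [1..<i] @ i # [Suc i..<Suc m]" using upt_split_at i by auto
  have P: "P \<in> gg_words Vm"
    unfolding P_def using v i by (intro copies_word_words) auto
  have Q: "Q \<in> gg_words Vm"
    unfolding Q_def using v i by (intro copies_word_words) auto
  have vi: "[((v, i), e)] \<in> gg_words Vm" using v i by simp
  have "\<forall>a\<in>set [((v, i), e)]. \<forall>d\<in>set P. (fst a, fst d) \<in> Em"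
  proof (intro ballI)
    fix a d assume "a \<in> set [((v, i), e)]" "d \<in> set P"
    moreover from \<open>d \<in> set P\<close> obtain j where "j \<in> set [1..<i]" "fst d = (v, j)"
      using fst_in_set_copies_word[of d v c "[1..<i]"] unfolding P_def by blast
    ultimately show "(fst a, fst d) \<in> Em" using infl_edges_copies[OF v i] i by auto
  qed
  then have "([((v, i), e)] @ P, P @ [((v, i), e)]) \<in> gg_rel Vm Em"
    by (rule gg_rel_commute_words[OF infl_edges_subset _ vi P])
  then have "([] @ (((v, i), e) # P) @ pow_word (v, i) (c i) @ Q,
      [] @ (P @ [((v, i), e)]) @ pow_word (v, i) (c i) @ Q) \<in> gg_rel Vm Em"
    by (intro gg_rel_append[OF infl_edges_subset]) (use v i Q pow_word_words[of "(v, i)" Vm] in auto)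
  then have "(((v, i), e) # clique_syllable v c, P @ (((v, i), e) # pow_word (v, i) (c i)) @ Q)
      \<in> gg_rel Vm Em"
    unfolding P_def Q_def clique_syllable_def by (subst split) simp
  also have "(P @ (((v, i), e) # pow_word (v, i) (c i)) @ Q,
      P @ pow_word (v, i) (c i + letter_sign e) @ Q) \<in> gg_rel Vm Em"
    by (rule gg_rel_append[OF infl_edges_subset gg_rel_Cons_pow_word[OF infl_edges_subset]])
      (use v i P Q in auto)
  also have "P @ pow_word (v, i) (c i + letter_sign e) @ Q = clique_syllable v c'"
  proof -
    have "copies_word v c' [1..<i] = P" "copies_word v c' [Suc i..<Suc m] = Q"
      unfolding P_def Q_def c'_def by (rule copies_word_cong, auto)+
    then show ?thesis
      unfolding clique_syllable_def
      by (subst split, simp only: copies_word_simps) (simp add: c'_def add.commute)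
  qed
  finally show ?thesis unfolding c'_def .
qed

lemma gg_rel_clique_syllable_copy_exponent:
  "u \<in> gg_words Vm \<Longrightarrow> \<forall>z\<in>set u. fst (fst z) = v \<Longrightarrow> v \<in> V \<Longrightarrow>
    (u, clique_syllable v (copy_exponent u)) \<in> gg_rel Vm Em"
proof (induction u)
  case Nil
  have "clique_syllable v (\<lambda>_. 0) = []" by (rule clique_syllable_zero) simp
  then show ?case using gg_rel_refl[OF infl_edges_subset gg_words_Nil] by simp
next
  case (Cons a u)
  obtain x i e where a: "a = ((x, i), e)" by (metis prod.collapse)
  have x: "x = v" and i: "i \<in> {1..m}" using Cons.prems a by auto
  have "([a] @ u @ [], [a] @ clique_syllable v (copy_exponent u) @ []) \<in> gg_rel Vm Em"
    by (rule gg_rel_append[OF infl_edges_subset Cons.IH]) (use Cons.prems in auto)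
  moreover have "(\<lambda>j. (if j = i then letter_sign e else 0) + copy_exponent u j) = copy_exponent (a # u)"
    by (rule ext) (simp add: a)
  then have "(a # clique_syllable v (copy_exponent u),
      clique_syllable v (copy_exponent (a # u))) \<in> gg_rel Vm Em"
    using gg_rel_Cons_clique_syllable[OF Cons.prems(3) i, of e "copy_exponent u"] a x by simp
  ultimately show ?case using gg_rel_infl_trans by (simp del: copy_exponent_simps)
qed

lemma gg_rel_clique_syllable_append:
  assumes v: "v \<in> V"
  shows "(clique_syllable v c @ clique_syllable v d, clique_syllable v (\<lambda>i. c i + d i)) \<in> gg_rel Vm Em"
proof -
  have "clique_syllable v (copy_exponent (clique_syllable v c @ clique_syllable v d))
      = clique_syllable v (\<lambda>i. c i + d i)"
    by (rule clique_syllable_cong) (simp add: copy_exponent_copies_word clique_syllable_def del: upt_Suc)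
  moreover have "(clique_syllable v c @ clique_syllable v d,
      clique_syllable v (copy_exponent (clique_syllable v c @ clique_syllable v d))) \<in> gg_rel Vm Em"
    by (rule gg_rel_clique_syllable_copy_exponent[OF _ _ v])
      (use clique_syllable_words[OF v] fst_in_set_clique_syllable in fastforce)+
  ultimately show ?thesis by simp
qed

end

context inflation
begin

definition clique_syllables :: "('v \<times> (nat \<Rightarrow> int)) list \<Rightarrow> (('v \<times> nat) \<times> bool) list" where
  "clique_syllables L = concat (map (\<lambda>(v, c). clique_syllable v c) L)"

lemma clique_syllables_simps [simp]:
  "clique_syllables [] = []"
  "clique_syllables ((v, c) # L) = clique_syllable v c @ clique_syllables L"
  "clique_syllables (L @ L') = clique_syllables L @ clique_syllables L'"
  unfolding clique_syllables_def by simp_all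

definition proper_syllables :: "('v \<times> (nat \<Rightarrow> int)) list \<Rightarrow> bool" where
  "proper_syllables L \<longleftrightarrow> (\<forall>(v, c)\<in>set L. v \<in> V \<and> (\<exists>i\<in>{1..m}. c i \<noteq> 0))"

lemma clique_syllables_words: "\<forall>(v, c)\<in>set L. v \<in> V \<Longrightarrow> clique_syllables L \<in> gg_words Vm"
  by (induction L) (auto simp: clique_syllable_words)

lemma fst_in_set_clique_syllables:
  "z \<in> set (clique_syllables L) \<Longrightarrow> \<exists>v c i. (v, c) \<in> set L \<and> i \<in> {1..m} \<and> fst z = (v, i)"
proof (induction L)
  case (Cons vc L)
  obtain v c where vc: "vc = (v, c)" by (cases vc)
  from Cons.prems consider "z \<in> set (clique_syllable v c)" | "z \<in> set (clique_syllables L)"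
    using vc by auto
  then show ?case
  proof cases
    case 1
    then obtain i where "i \<in> {1..m}" "fst z = (v, i)" using fst_in_set_clique_syllable by blast
    then show ?thesis using vc by (intro exI[of _ v] exI[of _ c] exI[of _ i]) simp
  next
    case 2
    then obtain v' c' i where "(v', c') \<in> set L" "i \<in> {1..m}" "fst z = (v', i)"
      using Cons.IH by blast
    then show ?thesis by (intro exI[of _ v'] exI[of _ c'] exI[of _ i]) simp
  qed
qed simp

lemma ex_clique_syllables:
  assumes w: "w \<in> gg_words Vm"
  shows "\<exists>L. proper_syllables L \<and> (clique_syllables L, w) \<in> gg_rel Vm Em"
proof -
  define f where "f = (\<lambda>((v :: 'v, i :: nat), e :: bool). (v, \<lambda>j. if j = i then letter_sign e else 0))"
  have "clique_syllables (map f u) = u \<and> proper_syllables (map f u)" if "u \<in> gg_words Vm" for u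
    using that
  proof (induction u)
    case Nil
    then show ?case by (simp add: proper_syllables_def)
  next
    case (Cons z u)
    obtain v i e where z: "z = ((v, i), e)" by (metis prod.collapse)
    have vi: "v \<in> V" "i \<in> {1..m}" using Cons.prems z by auto
    have "f z = (v, \<lambda>j. if j = i then letter_sign e else 0)" by (simp add: f_def z)
    then have "clique_syllables (map f (z # u)) = [((v, i), e)] @ clique_syllables (map f u)"
      using clique_syllable_single[OF vi(2), of v e] by simp
    moreover have "letter_sign e \<noteq> 0" by (simp add: letter_sign_def)
    ultimately show ?case using Cons vi by (auto simp: proper_syllables_def f_def z)
  qed
  then show ?thesis using w gg_rel_refl[OF infl_edges_subset w] by metis
qed

lemma gg_rel_merge_clique_syllables:
  assumes "proper_syllables (P @ (v, c) # A @ (v, d) # B)"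
    and adj: "\<forall>z\<in>set A. (fst z, v) \<in> E"
  shows "(clique_syllables (P @ (v, c) # A @ (v, d) # B),
          clique_syllables P @ clique_syllable v (\<lambda>i. c i + d i) @ clique_syllables A @ clique_syllables B)
         \<in> gg_rel Vm Em"
proof -
  have v: "v \<in> V" and "\<forall>(v, c)\<in>set P. v \<in> V" "\<forall>(v, c)\<in>set A. v \<in> V" "\<forall>(v, c)\<in>set B. v \<in> V"
    using assms(1) unfolding proper_syllables_def by auto
  then have P: "clique_syllables P \<in> gg_words Vm" and A: "clique_syllables A \<in> gg_words Vm"
    and B: "clique_syllables B \<in> gg_words Vm"
    using clique_syllables_words by auto
  have c: "clique_syllable v c \<in> gg_words Vm" and d: "clique_syllable v d \<in> gg_words Vm"
    using clique_syllable_words[OF v] by auto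
  have "\<forall>z\<in>set (clique_syllables A). \<forall>z'\<in>set (clique_syllable v d). (fst z, fst z') \<in> Em"
  proof (intro ballI)
    fix z z' assume "z \<in> set (clique_syllables A)" "z' \<in> set (clique_syllable v d)"
    then obtain u c' j i where "(u, c') \<in> set A" "j \<in> {1..m}" "fst z = (u, j)"
      and "i \<in> {1..m}" "fst z' = (v, i)"
      using fst_in_set_clique_syllables fst_in_set_clique_syllable by meson
    then show "(fst z, fst z') \<in> Em" using adj infl_edges_adjacent by fastforce
  qed
  then have "(clique_syllables A @ clique_syllable v d, clique_syllable v d @ clique_syllables A)
      \<in> gg_rel Vm Em"
    by (rule gg_rel_commute_words[OF infl_edges_subset _ A d])
  then have "((clique_syllables P @ clique_syllable v c) @ (clique_syllables A @ clique_syllable v d)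
        @ clique_syllables B,
      (clique_syllables P @ clique_syllable v c) @ (clique_syllable v d @ clique_syllables A)
        @ clique_syllables B) \<in> gg_rel Vm Em"
    by (rule gg_rel_append[OF infl_edges_subset]) (use P c B in auto)
  then have "(clique_syllables (P @ (v, c) # A @ (v, d) # B),
      clique_syllables P @ (clique_syllable v c @ clique_syllable v d)
        @ (clique_syllables A @ clique_syllables B)) \<in> gg_rel Vm Em"
    by simp
  also have "(clique_syllables P @ (clique_syllable v c @ clique_syllable v d)
        @ (clique_syllables A @ clique_syllables B),
      clique_syllables P @ clique_syllable v (\<lambda>i. c i + d i)
        @ (clique_syllables A @ clique_syllables B)) \<in> gg_rel Vm Em"
    by (rule gg_rel_append[OF infl_edges_subset gg_rel_clique_syllable_append[OF v]])
      (use P A B in auto)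
  finally show ?thesis by simp
qed

lemma ex_reduced_clique_syllables:
  assumes w: "w \<in> gg_words Vm"
  shows "\<exists>L. proper_syllables L \<and> syllables_reduced E L \<and> (clique_syllables L, w) \<in> gg_rel Vm Em"
proof -
  define R where "R L \<longleftrightarrow> proper_syllables L \<and> (clique_syllables L, w) \<in> gg_rel Vm Em" for L
  obtain L0 where "R L0" using ex_clique_syllables[OF w] R_def by blast
  then obtain L where RL: "R L" and min: "\<And>L'. R L' \<Longrightarrow> length L \<le> length L'"
    using ex_has_least_nat[of R L0 length] by blast
  have "syllables_reduced E L"
  proof (rule ccontr)
    assume "\<not> syllables_reduced E L"
    then obtain P x A y B where L: "L = P @ x # A @ y # B" and "fst y = fst x"
      and adj: "\<forall>z\<in>set A. (fst z, fst x) \<in> E"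
      using not_syllables_reduced by blast
    then obtain v c d where x: "x = (v, c)" and y: "y = (v, d)" by (metis prod.collapse)
    have proper: "proper_syllables L" and Lw: "(clique_syllables L, w) \<in> gg_rel Vm Em"
      using RL R_def by auto
    have "(clique_syllables L, clique_syllables P @ clique_syllable v (\<lambda>i. c i + d i)
        @ clique_syllables A @ clique_syllables B) \<in> gg_rel Vm Em"
      using gg_rel_merge_clique_syllables proper adj unfolding L x y by simp
    then have merged: "(clique_syllables P @ clique_syllable v (\<lambda>i. c i + d i)
        @ clique_syllables A @ clique_syllables B, w) \<in> gg_rel Vm Em"
      using gg_rel_infl_trans[OF gg_rel_sym[OF infl_edges_subset] Lw] by blast
    have vV: "v \<in> V" using proper unfolding L x proper_syllables_def by auto
    show False
    proof (cases "\<exists>i\<in>{1..m}. c i + d i \<noteq> 0")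
      case True
      then have "R (P @ (v, \<lambda>i. c i + d i) # A @ B)"
        using proper merged vV unfolding R_def L proper_syllables_def by auto
      then show False using min[of "P @ (v, \<lambda>i. c i + d i) # A @ B"] L by simp
    next
      case False
      then have "clique_syllable v (\<lambda>i. c i + d i) = []" using clique_syllable_zero by auto
      then have "R (P @ A @ B)"
        using proper merged unfolding R_def L proper_syllables_def by auto
      then show False using min[of "P @ A @ B"] L by simp
    qed
  qed
  then show ?thesis using RL R_def by blast
qed

end

section \<open>Discriminating the inflation\<close>

lemma abs_sum_digits_less:
  fixes c :: "nat \<Rightarrow> int"
  assumes N: "1 \<le> N" and digits: "\<forall>i\<in>{1..k}. \<bar>c i\<bar> < int N"
  shows "\<bar>\<Sum>i=1..k. c i * int N ^ i\<bar> < int N ^ Suc k"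
  using digits
proof (induction k)
  case 0
  then show ?case using N by simp
next
  case (Suc k)
  define S where "S = (\<Sum>i=1..k. c i * int N ^ i)"
  have "\<bar>c (Suc k)\<bar> * int N ^ Suc k \<le> (int N - 1) * int N ^ Suc k"
    using Suc.prems by (intro mult_right_mono) auto
  moreover have "\<bar>S\<bar> < int N ^ Suc k" using Suc unfolding S_def by auto
  moreover have "\<bar>c (Suc k) * int N ^ Suc k\<bar> = \<bar>c (Suc k)\<bar> * int N ^ Suc k"
    by (simp add: abs_mult)
  moreover have "\<bar>S + c (Suc k) * int N ^ Suc k\<bar> \<le> \<bar>S\<bar> + \<bar>c (Suc k) * int N ^ Suc k\<bar>"
    by (rule abs_triangle_ineq)
  ultimately have "\<bar>S + c (Suc k) * int N ^ Suc k\<bar> < int N ^ Suc k + (int N - 1) * int N ^ Suc k"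
    by linarith
  also have "\<dots> = int N ^ Suc (Suc k)" by (simp add: algebra_simps)
  finally show ?case unfolding S_def by simp
qed

text \<open>Base-\<open>N\<close> expansions with digits of absolute value below \<open>N\<close> are unique.\<close>
lemma sum_digits_nonzero:
  fixes c :: "nat \<Rightarrow> int"
  assumes N: "1 \<le> N" and digits: "\<forall>i\<in>{1..k}. \<bar>c i\<bar> < int N" and "\<exists>i\<in>{1..k}. c i \<noteq> 0"
  shows "(\<Sum>i=1..k. c i * int N ^ i) \<noteq> 0"
  using assms(2,3)
proof (induction k)
  case (Suc k)
  show ?case
  proof (cases "c (Suc k) = 0")
    case True
    then have "\<exists>i\<in>{1..k}. c i \<noteq> 0" using Suc.prems(2) by (auto simp: le_Suc_eq)
    then show ?thesis using Suc True by simp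
  next
    case False
    define S where "S = (\<Sum>i=1..k. c i * int N ^ i)"
    have "1 * int N ^ Suc k \<le> \<bar>c (Suc k)\<bar> * int N ^ Suc k"
      by (rule mult_right_mono) (use False in auto)
    then have "int N ^ Suc k \<le> \<bar>c (Suc k) * int N ^ Suc k\<bar>" by (simp add: abs_mult)
    moreover have "\<bar>S\<bar> < int N ^ Suc k"
      using abs_sum_digits_less[OF N] Suc.prems(1) unfolding S_def by simp
    ultimately have "S + c (Suc k) * int N ^ Suc k \<noteq> 0" by linarith
    then show ?thesis unfolding S_def by simp
  qed
qed simp

definition pow_subst :: "nat \<Rightarrow> ('v \<times> nat) \<times> bool \<Rightarrow> ('v \<times> bool) list" where
  "pow_subst N = (\<lambda>((v, i), e). pow_word v (letter_sign e * int N ^ i))"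

definition proj_subst :: "('v \<times> nat) \<times> bool \<Rightarrow> ('v \<times> bool) list" where
  "proj_subst = (\<lambda>((v, i), e). [(v, e)])"

definition first_copy_subst :: "'v \<times> bool \<Rightarrow> (('v \<times> nat) \<times> bool) list" where
  "first_copy_subst = (\<lambda>(v, e). [((v, 1), e)])"

lemma subst_word_proj_first_copy: "subst_word proj_subst (subst_word first_copy_subst x) = x"
  by (induction x) (auto simp: proj_subst_def first_copy_subst_def)

context inflation
begin

lemma word_subst_pow_subst: "word_subst Vm Em V E (pow_subst N)"
proof
  fix a :: "('v \<times> nat) \<times> bool" assume a: "fst a \<in> Vm"
  obtain v i e where a': "a = ((v, i), e)" by (metis prod.collapse)
  have v: "v \<in> V" using a a' by simp
  show "pow_subst N a \<in> gg_words V" unfolding pow_subst_def a' using pow_word_words[OF v] by simp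
  have "(pow_subst N a @ pow_subst N (inv_letter a),
      pow_word v (letter_sign e * int N ^ i + letter_sign (\<not> e) * int N ^ i)) \<in> gg_rel V E"
    unfolding pow_subst_def a' using gg_rel_pow_word_add[OF EV v] by simp
  then show "(pow_subst N a @ pow_subst N (inv_letter a), []) \<in> gg_rel V E"
    by (cases e) (simp_all add: letter_sign_def)
next
  fix a b :: "('v \<times> nat) \<times> bool" assume ab: "(fst a, fst b) \<in> Em"
  obtain v i e where a: "a = ((v, i), e)" by (metis prod.collapse)
  obtain w k d where b: "b = ((w, k), d)" by (metis prod.collapse)
  define r where "r = letter_sign e * int N ^ i"
  define s where "s = letter_sign d * int N ^ k"
  from ab have "((v, i), (w, k)) \<in> Em" unfolding a b by simp
  then show "(pow_subst N a @ pow_subst N b, pow_subst N b @ pow_subst N a) \<in> gg_rel V E"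
  proof (cases rule: infl_edgesE)
    case 1
    then have "(pow_word v r @ pow_word v s, pow_word v (s + r)) \<in> gg_rel V E"
      using gg_rel_pow_word_add[OF EV, of v r s] by (simp add: add.commute)
    moreover have "(pow_word v (s + r), pow_word v s @ pow_word v r) \<in> gg_rel V E"
      using gg_rel_sym[OF EV gg_rel_pow_word_add[OF EV]] 1 by blast
    ultimately show ?thesis
      unfolding pow_subst_def r_def s_def a b using 1 gg_rel_trans[OF EV] by auto
  next
    case 2
    then have "v \<in> V" "w \<in> V" using EV by auto
    then show ?thesis
      unfolding pow_subst_def a b using 2
      by (simp, intro gg_rel_commute_words[OF EV]) (auto dest!: fst_in_set_pow_word intro: pow_word_words)
  qed
qed (rule infl_edges_subset, rule EV)

lemma word_subst_proj_subst: "word_subst Vm Em V E proj_subst"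
proof
  fix a :: "('v \<times> nat) \<times> bool" assume "fst a \<in> Vm"
  moreover obtain v i e where a: "a = ((v, i), e)" by (metis prod.collapse)
  ultimately have v: "v \<in> V" by simp
  show "proj_subst a \<in> gg_words V" unfolding proj_subst_def a using v by simp
  show "(proj_subst a @ proj_subst (inv_letter a), []) \<in> gg_rel V E"
    unfolding proj_subst_def a using gg_rel_cancel[OF EV v] by simp
next
  fix a b :: "('v \<times> nat) \<times> bool" assume ab: "(fst a, fst b) \<in> Em"
  obtain v i e where a: "a = ((v, i), e)" by (metis prod.collapse)
  obtain w k d where b: "b = ((w, k), d)" by (metis prod.collapse)
  from ab have "((v, i), (w, k)) \<in> Em" unfolding a b by simp
  then show "(proj_subst a @ proj_subst b, proj_subst b @ proj_subst a) \<in> gg_rel V E"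
  proof (cases rule: infl_edgesE)
    case 1
    then have "([(v, e), (v, d)], [(v, d), (v, e)]) \<in> gg_rel V E"
      using gg_rel_refl[OF EV] gg_rel_trans[OF EV gg_rel_cancel[OF EV, of v e]
          gg_rel_sym[OF EV gg_rel_cancel[OF EV, of v d]]]
      by (cases "d = e") auto
    then show ?thesis unfolding proj_subst_def a b using 1 by simp
  next
    case 2
    then show ?thesis unfolding proj_subst_def a b using gg_rel_commute[OF EV] by simp
  qed
qed (rule infl_edges_subset, rule EV)

lemma word_subst_first_copy_subst: "word_subst V E Vm Em first_copy_subst"
proof
  fix a :: "'v \<times> bool" assume "fst a \<in> V"
  moreover obtain v e where a: "a = (v, e)" by (metis prod.collapse)
  ultimately have v: "(v, 1) \<in> Vm" using m_pos by simp
  show "first_copy_subst a \<in> gg_words Vm" unfolding first_copy_subst_def a using v by simp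
  show "(first_copy_subst a @ first_copy_subst (inv_letter a), []) \<in> gg_rel Vm Em"
    unfolding first_copy_subst_def a using gg_rel_cancel[OF infl_edges_subset v] by simp
next
  fix a b :: "'v \<times> bool" assume ab: "(fst a, fst b) \<in> E"
  obtain v e where a: "a = (v, e)" by (metis prod.collapse)
  obtain w d where b: "b = (w, d)" by (metis prod.collapse)
  have "((v, 1), (w, 1)) \<in> Em" using ab a b m_pos by (intro infl_edges_adjacent) auto
  then show "(first_copy_subst a @ first_copy_subst b, first_copy_subst b @ first_copy_subst a)
      \<in> gg_rel Vm Em"
    unfolding first_copy_subst_def a b using gg_rel_commute[OF infl_edges_subset] by simp
qed (rule EV, rule infl_edges_subset)

abbreviation "G \<equiv> graph_group V E"
abbreviation "Gm \<equiv> graph_group Vm Em"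

lemma inj_on_first_copy_hom: "inj_on (subst_hom Vm Em first_copy_subst) (carrier G)"
proof (rule inj_on_inverseI)
  interpret first: word_subst V E Vm Em first_copy_subst by (rule word_subst_first_copy_subst)
  interpret proj: word_subst Vm Em V E proj_subst by (rule word_subst_proj_subst)
  fix X assume "X \<in> carrier G"
  then obtain x where x: "x \<in> gg_words V" and X: "X = gg_rel V E `` {x}"
    by (rule carrier_graph_groupE[OF EV])
  show "subst_hom V E proj_subst (subst_hom Vm Em first_copy_subst X) = X"
    unfolding X first.subst_hom_class[OF x] proj.subst_hom_class[OF first.subst_word_words[OF x]]
      subst_word_proj_first_copy ..
qed

text \<open>Under \<open>pow_subst N\<close> the clique syllable with exponent vector \<open>c\<close>
  collapses to a single power of \<open>v\<close>, whose exponent has base-\<open>N\<close> digits \<open>c\<close>.\<close>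
definition collapse :: "nat \<Rightarrow> ('v \<times> (nat \<Rightarrow> int)) list \<Rightarrow> ('v \<times> int) list" where
  "collapse N L = map (\<lambda>(v, c). (v, \<Sum>i=1..m. c i * int N ^ i)) L"

lemma gg_rel_subst_pow_word:
  assumes v: "v \<in> V"
  shows "(subst_word (pow_subst N) (pow_word (v, i) k), pow_word v (k * int N ^ i)) \<in> gg_rel V E"
proof -
  have "subst_word (pow_subst N) (pow_word (v, i) k)
      = concat (replicate (nat \<bar>k\<bar>) (pow_word v (letter_sign (0 \<le> k) * int N ^ i)))"
    unfolding subst_word_def pow_word_def pow_subst_def by (simp add: map_replicate_const)
  moreover have "int (nat \<bar>k\<bar>) * (letter_sign (0 \<le> k) * int N ^ i) = k * int N ^ i"
    by (simp add: letter_sign_def)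
  ultimately show ?thesis using gg_rel_concat_replicate_pow_word[OF EV v] by metis
qed

lemma gg_rel_subst_clique_syllable:
  assumes v: "v \<in> V"
  shows "(subst_word (pow_subst N) (clique_syllable v c), pow_word v (\<Sum>i=1..m. c i * int N ^ i))
    \<in> gg_rel V E"
proof -
  have "(subst_word (pow_subst N) (copies_word v c is), pow_word v (\<Sum>i\<leftarrow>is. c i * int N ^ i))
      \<in> gg_rel V E" for "is"
  proof (induction "is")
    case Nil
    then show ?case using gg_rel_refl[OF EV] by simp
  next
    case (Cons i "is")
    have "(subst_word (pow_subst N) (copies_word v c (i # is)),
        pow_word v (c i * int N ^ i) @ pow_word v (\<Sum>i\<leftarrow>is. c i * int N ^ i)) \<in> gg_rel V E"
      using gg_rel_concat[OF EV gg_rel_subst_pow_word[OF v] Cons.IH] by simp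
    then show ?case using gg_rel_trans[OF EV _ gg_rel_pow_word_add[OF EV v]] by simp
  qed
  from this[of "[1..<Suc m]"] show ?thesis
    unfolding clique_syllable_def
    by (simp add: sum_list_distinct_conv_sum_set atLeastLessThanSuc_atLeastAtMost del: upt_Suc)
qed

lemma gg_rel_subst_clique_syllables:
  "\<forall>(v, c)\<in>set L. v \<in> V \<Longrightarrow>
    (subst_word (pow_subst N) (clique_syllables L), syllable_word (collapse N L)) \<in> gg_rel V E"
proof (induction L)
  case Nil
  then show ?case using gg_rel_refl[OF EV] by (simp add: collapse_def)
next
  case (Cons vc L)
  obtain v c where vc: "vc = (v, c)" by (cases vc)
  then show ?case
    using Cons gg_rel_concat[OF EV gg_rel_subst_clique_syllable Cons.IH] by (simp add: collapse_def)
qed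

lemma reduced_syllable_word_collapse:
  assumes proper: "proper_syllables L" and reduced: "syllables_reduced E L"
    and digits: "\<forall>(v, c)\<in>set L. \<forall>i\<in>{1..m}. \<bar>c i\<bar> < int N"
  shows "reduced E (syllable_word (collapse N L))"
    and "L \<noteq> [] \<Longrightarrow> syllable_word (collapse N L) \<noteq> []"
proof -
  have N: "1 \<le> N" if "L \<noteq> []"
  proof -
    obtain v c L' where "L = (v, c) # L'" using \<open>L \<noteq> []\<close> by (metis list.exhaust prod.collapse)
    then have "\<bar>c 1\<bar> < int N" using digits m_pos by auto
    then show ?thesis by linarith
  qed
  have nonzero: "\<forall>(v, n)\<in>set (collapse N L). n \<noteq> 0"
  proof
    fix vn assume "vn \<in> set (collapse N L)"
    then obtain v c where vc: "(v, c) \<in> set L" and vn: "vn = (v, \<Sum>i=1..m. c i * int N ^ i)"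
      unfolding collapse_def by auto
    have "L \<noteq> []" using vc by auto
    moreover have "\<forall>i\<in>{1..m}. \<bar>c i\<bar> < int N" using digits vc by auto
    moreover have "\<exists>i\<in>{1..m}. c i \<noteq> 0" using proper vc unfolding proper_syllables_def by auto
    ultimately have "(\<Sum>i=1..m. c i * int N ^ i) \<noteq> 0" using sum_digits_nonzero N by blast
    then show "case vn of (v, n) \<Rightarrow> n \<noteq> 0" using vn by simp
  qed
  moreover have "syllables_reduced E (collapse N L)"
    unfolding collapse_def using reduced by (subst syllables_reduced_map) auto
  ultimately show "reduced E (syllable_word (collapse N L))"
    by (intro reduced_syllable_word[OF symE irrE])
  assume "L \<noteq> []"
  then obtain v n L' where "collapse N L = (v, n) # L'" unfolding collapse_def by (cases L) auto
  with nonzero show "syllable_word (collapse N L) \<noteq> []" by (simp add: pow_word_eq_Nil_iff)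
qed

lemma eventually_pow_subst_hom_nontrivial:
  assumes g: "g \<in> carrier Gm" and g1: "g \<noteq> \<one>\<^bsub>Gm\<^esub>"
  shows "eventually (\<lambda>N. subst_hom V E (pow_subst N) g \<noteq> \<one>\<^bsub>G\<^esub>) sequentially"
proof -
  obtain w where w: "w \<in> gg_words Vm" and gw: "g = gg_rel Vm Em `` {w}"
    using carrier_graph_groupE[OF infl_edges_subset g] by blast
  obtain L where proper: "proper_syllables L" and reduced: "syllables_reduced E L"
    and Lw: "(clique_syllables L, w) \<in> gg_rel Vm Em"
    using ex_reduced_clique_syllables[OF w] by blast
  have L: "\<forall>(v, c)\<in>set L. v \<in> V" using proper unfolding proper_syllables_def by auto
  have "L \<noteq> []"
  proof
    assume "L = []"
    then have "gg_rel Vm Em `` {[]} = gg_rel Vm Em `` {w}"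
      using Lw gg_rel_class_eq_iff[OF infl_edges_subset gg_words_Nil] by simp
    then show False using g1 gw one_graph_group[OF infl_edges_subset] by simp
  qed
  define B where "B = nat (\<Sum>(v, c)\<leftarrow>L. \<Sum>i=1..m. \<bar>c i\<bar>)"
  have digits: "\<forall>(v, c)\<in>set L. \<forall>i\<in>{1..m}. \<bar>c i\<bar> < int N" if "B < N" for N
  proof (clarify)
    fix v c i assume vc: "(v, c) \<in> set L" and i: "i \<in> {1..m}"
    have "\<bar>c i\<bar> \<le> (\<Sum>i=1..m. \<bar>c i\<bar>)" by (rule member_le_sum) (use i in auto)
    also have "\<dots> \<le> (\<Sum>(v, c)\<leftarrow>L. \<Sum>i=1..m. \<bar>c i\<bar>)"
      using member_le_sum_list[of "(\<lambda>(v, c). \<Sum>i=1..m. \<bar>c i\<bar>) (v, c)"] vc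
      by (force intro: sum_nonneg)
    finally show "\<bar>c i\<bar> < int N" using that unfolding B_def by linarith
  qed
  have "subst_hom V E (pow_subst N) g \<noteq> \<one>\<^bsub>G\<^esub>" if "B < N" for N
  proof
    interpret pow: word_subst Vm Em V E "pow_subst N" by (rule word_subst_pow_subst)
    note collapse = reduced_syllable_word_collapse[OF proper reduced digits[OF that]]
    have "(subst_word (pow_subst N) w, syllable_word (collapse N L)) \<in> gg_rel V E"
      using gg_rel_trans[OF EV pow.subst_word_gg_rel[OF gg_rel_sym[OF infl_edges_subset Lw]]
          gg_rel_subst_clique_syllables[OF L]] .
    moreover assume "subst_hom V E (pow_subst N) g = \<one>\<^bsub>G\<^esub>"
    then have "(subst_word (pow_subst N) w, []) \<in> gg_rel V E"
      unfolding gw pow.subst_hom_class[OF w] one_graph_group[OF EV]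
      using gg_rel_class_eq_iff[OF EV pow.subst_word_words[OF w]] by simp
    ultimately have "(syllable_word (collapse N L), []) \<in> gg_rel V E"
      using gg_rel_trans[OF EV gg_rel_sym[OF EV]] by blast
    then have "syllable_word (collapse N L) = []"
      using reduced_gg_steps_Nil[OF symE irrE collapse(1)] gg_rel_iff[OF EV] by blast
    then show False using collapse(2) \<open>L \<noteq> []\<close> by blast
  qed
  then show ?thesis
    unfolding eventually_sequentially by (intro exI[of _ "Suc B"]) auto
qed

lemma universally_equivalent_inflation: "universally_equivalent G Gm"
  unfolding universally_equivalent_def
proof (intro allI iffI)
  fix \<phi> assume "sat_universal G \<phi>"
  moreover have "\<exists>f. f \<in> hom Gm G \<and> inj_on f S" if "finite S" "S \<subseteq> carrier Gm" for S
  proof -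
    have "\<exists>N. inj_on (subst_hom V E (pow_subst N)) S"
      by (rule ex_inj_on_if_eventually_nontrivial[OF group_graph_group[OF infl_edges_subset]
            group_graph_group[OF EV] word_subst.subst_hom_hom[OF word_subst_pow_subst] that
            eventually_pow_subst_hom_nontrivial])
    then show ?thesis using word_subst.subst_hom_hom[OF word_subst_pow_subst] by blast
  qed
  ultimately show "sat_universal Gm \<phi>"
    by (rule sat_universal_if_locally_embeds[OF group_graph_group[OF infl_edges_subset]
          group_graph_group[OF EV], rotated])
next
  fix \<phi> assume "sat_universal Gm \<phi>"
  moreover have "\<exists>f. f \<in> hom G Gm \<and> inj_on f S" if "S \<subseteq> carrier G" for S
    using word_subst.subst_hom_hom[OF word_subst_first_copy_subst]
      inj_on_subset[OF inj_on_first_copy_hom that] by blast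
  ultimately show "sat_universal G \<phi>"
    by (rule sat_universal_if_locally_embeds[OF group_graph_group[OF EV]
          group_graph_group[OF infl_edges_subset], rotated])
qed

end

theorem proposition4p2:
  fixes V :: "'v set" and E :: "('v \<times> 'v) set" and m :: nat
  assumes "finite V" and "E \<subseteq> V \<times> V" and "sym E" and "\<forall>v. (v, v) \<notin> E"
    and "m \<ge> 1"
  shows "universally_equivalent (graph_group V E)
           (graph_group (infl_vertices V m) (infl_edges V E m))"
proof -
  interpret inflation V E m using assms by unfold_locales auto
  show ?thesis by (rule universally_equivalent_inflation)
qed

end
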